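(* For each $N\ge1$ let $\eta^N(t)$ be an irreducible continuous-time Markov chain on a finite set $\Omega_N$ with jump rates $R_N(\eta,\xi)$ and unique stationary distribution $\nu_N$; let $A_N\subset\Omega_N$ with $\lim_N\nu_N(A_N)=0$ and $H_N=\inf\{t>0:\eta^N(t)\in A_N\}$. Assume $T^{\rm mix}_N\ll r_N(A_N^c,A_N)^{-1}$, and let $\theta_N=\inf\{t>0:\mathbb P_{\nu_N}[H_N>t]<e^{-1}\}$. Then $\lim_{N\to\infty}\mathbb E_{\nu_N}[H_N]/\theta_N=1$.
   Context: $T^{\rm mix}_N=\inf\{t>0:\max_{\eta}\|P_t(\eta,\cdot)-\nu_N\|_{\rm TV}\le1/4\}$ where $P_t(\eta,\xi)=\mathbb P_\eta[\eta^N(t)=\xi]$. $R_N(\xi,A_N)=\sum_{\zeta\in A_N}R_N(\xi,\zeta)$, $r_N(A_N^c,A_N)=\frac1{\nu_N(A_N^c)}\sum_{\xi\in A_N^c}\nu_N(\xi)R_N(\xi,A_N)$. $a_N\ll b_N$ means $a_N/b_N\to0$. $\mathbb P_{\nu_N},\mathbb E_{\nu_N}$ refer to the chain started from $\nu_N$. *)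

theory Defs
  imports "HOL-Analysis.Analysis"
begin

definition generator :: "'a set \<Rightarrow> ('a \<Rightarrow> 'a \<Rightarrow> real) \<Rightarrow> 'a \<Rightarrow> 'a \<Rightarrow> real" where
  "generator \<Omega> R x y = (if x = y then - (\<Sum>z\<in>\<Omega> - {x}. R x z) else R x y)"

fun mpow :: "'a set \<Rightarrow> ('a \<Rightarrow> 'a \<Rightarrow> real) \<Rightarrow> nat \<Rightarrow> 'a \<Rightarrow> 'a \<Rightarrow> real" where
  "mpow S M 0 x y = (if x = y then 1 else 0)"
| "mpow S M (Suc k) x y = (\<Sum>z\<in>S. M x z * mpow S M k z y)"

definition mexp :: "'a set \<Rightarrow> ('a \<Rightarrow> 'a \<Rightarrow> real) \<Rightarrow> real \<Rightarrow> 'a \<Rightarrow> 'a \<Rightarrow> real" where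
  "mexp S M t x y = (\<Sum>k. t ^ k / fact k * mpow S M k x y)"

definition semigroup :: "'a set \<Rightarrow> ('a \<Rightarrow> 'a \<Rightarrow> real) \<Rightarrow> real \<Rightarrow> 'a \<Rightarrow> 'a \<Rightarrow> real" where
  "semigroup \<Omega> R t = mexp \<Omega> (generator \<Omega> R) t"

text \<open>Semigroup of the chain killed upon entering A:
  killed_semigroup t x y = P_x[eta(t) = y, H_A > t] for x, y outside A.\<close>
definition killed_semigroup :: "'a set \<Rightarrow> ('a \<Rightarrow> 'a \<Rightarrow> real) \<Rightarrow> 'a set \<Rightarrow> real \<Rightarrow> 'a \<Rightarrow> 'a \<Rightarrow> real" where
  "killed_semigroup \<Omega> R A t = mexp (\<Omega> - A) (generator \<Omega> R) t"

definition valid_rates :: "'a set \<Rightarrow> ('a \<Rightarrow> 'a \<Rightarrow> real) \<Rightarrow> bool" where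
  "valid_rates \<Omega> R = (\<forall>x\<in>\<Omega>. \<forall>y\<in>\<Omega>. x \<noteq> y \<longrightarrow> R x y \<ge> 0)"

definition irreducible_chain :: "'a set \<Rightarrow> ('a \<Rightarrow> 'a \<Rightarrow> real) \<Rightarrow> bool" where
  "irreducible_chain \<Omega> R =
     (\<forall>x\<in>\<Omega>. \<forall>y\<in>\<Omega>. (x, y) \<in> {(a, b). a \<in> \<Omega> \<and> b \<in> \<Omega> \<and> a \<noteq> b \<and> R a b > 0}\<^sup>*)"

definition stationary :: "'a set \<Rightarrow> ('a \<Rightarrow> 'a \<Rightarrow> real) \<Rightarrow> ('a \<Rightarrow> real) \<Rightarrow> bool" where
  "stationary \<Omega> R \<nu> = ((\<forall>x\<in>\<Omega>. \<nu> x \<ge> 0) \<and> sum \<nu> \<Omega> = 1 \<and>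
      (\<forall>y\<in>\<Omega>. (\<Sum>x\<in>\<Omega>. \<nu> x * generator \<Omega> R x y) = 0))"

definition tv_dist :: "'a set \<Rightarrow> ('a \<Rightarrow> real) \<Rightarrow> ('a \<Rightarrow> real) \<Rightarrow> real" where
  "tv_dist \<Omega> p q = (1/2) * (\<Sum>x\<in>\<Omega>. \<bar>p x - q x\<bar>)"

definition mixing_time :: "'a set \<Rightarrow> ('a \<Rightarrow> 'a \<Rightarrow> real) \<Rightarrow> ('a \<Rightarrow> real) \<Rightarrow> real" where
  "mixing_time \<Omega> R \<nu> =
     Inf {t. t > 0 \<and> (\<forall>\<eta>\<in>\<Omega>. tv_dist \<Omega> (semigroup \<Omega> R t \<eta>) \<nu> \<le> 1/4)}"

definition escape_rate :: "'a set \<Rightarrow> ('a \<Rightarrow> 'a \<Rightarrow> real) \<Rightarrow> ('a \<Rightarrow> real) \<Rightarrow> 'a set \<Rightarrow> real" where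
  "escape_rate \<Omega> R \<nu> A =
     (1 / sum \<nu> (\<Omega> - A)) * (\<Sum>\<xi>\<in>\<Omega> - A. \<nu> \<xi> * (\<Sum>\<zeta>\<in>A. R \<xi> \<zeta>))"

text \<open>P_nu[H_A > t], for t >= 0.\<close>
definition survival :: "'a set \<Rightarrow> ('a \<Rightarrow> 'a \<Rightarrow> real) \<Rightarrow> ('a \<Rightarrow> real) \<Rightarrow> 'a set \<Rightarrow> real \<Rightarrow> real" where
  "survival \<Omega> R \<nu> A t =
     (\<Sum>\<eta>\<in>\<Omega> - A. \<nu> \<eta> * (\<Sum>\<xi>\<in>\<Omega> - A. killed_semigroup \<Omega> R A t \<eta> \<xi>))"

text \<open>E_nu[H_A] = integral over [0,oo) of P_nu[H_A > t].\<close>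
definition expected_hitting :: "'a set \<Rightarrow> ('a \<Rightarrow> 'a \<Rightarrow> real) \<Rightarrow> ('a \<Rightarrow> real) \<Rightarrow> 'a set \<Rightarrow> real" where
  "expected_hitting \<Omega> R \<nu> A =
     enn2real (\<integral>\<^sup>+ t. ennreal (survival \<Omega> R \<nu> A t) * indicator {0..} t \<partial>lborel)"

definition theta_time :: "'a set \<Rightarrow> ('a \<Rightarrow> 'a \<Rightarrow> real) \<Rightarrow> ('a \<Rightarrow> real) \<Rightarrow> 'a set \<Rightarrow> real" where
  "theta_time \<Omega> R \<nu> A = Inf {t. t > 0 \<and> survival \<Omega> R \<nu> A t < exp (-1)}"

end

theory Submission
  imports Defs "HOL-Real_Asymp.Real_Asymp"
begin

(* Write S(t) = P_nu[H > t] and rho = nu(A^c) r(A^c, A) for the equilibrium flux into A. It starts at 1 - nu(A) and loses mass at rate at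
   most rho, so S(t) >= S(0) - t rho and S is rho-Lipschitz; in particular theta >= (1 - e^-1 - nu(A))/rho.
   And a gap of k mixing times decorrelates disjoint time windows: S(t + gap + s) equals
   S(t) S(s) up to S(t) 2^-k and gap * rho. Cutting time into blocks of length theta/m + gap
   therefore makes S(j * block) roughly p^j with p = S(theta/m); since S(theta) = e^-1 this forces
   p ~ e^(-1/m), and E[H] = int S lies between the corresponding geometric sums, so
   E[H]/theta ~ (1/m)/(1 - e^(-1/m)), which tends to 1 as m grows. The hypothesis
   T_mix << 1/r(A^c, A) makes gap * rho negligible against theta for every fixed m and k. *)

section \<open>Matrix exponentials over a finite index set\<close>

definition abs_entry_sum :: "'a set \<Rightarrow> ('a \<Rightarrow> 'a \<Rightarrow> real) \<Rightarrow> real" where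
  "abs_entry_sum S M = (\<Sum>a\<in>S. \<Sum>b\<in>S. \<bar>M a b\<bar>)"

lemma abs_entry_sum_nonneg: "abs_entry_sum S M \<ge> 0"
  unfolding abs_entry_sum_def by (intro sum_nonneg) auto

lemma mpow_bound:
  assumes "finite S" "x \<in> S"
  shows "\<bar>mpow S M k x y\<bar> \<le> abs_entry_sum S M ^ k"
  using assms(2)
proof (induction k arbitrary: x y)
  case 0
  then show ?case by simp
next
  case (Suc k)
  have row: "(\<Sum>z\<in>S. \<bar>M x z\<bar>) \<le> abs_entry_sum S M"
    unfolding abs_entry_sum_def using Suc.prems assms(1)
    by (intro member_le_sum[where f="\<lambda>a. \<Sum>b\<in>S. \<bar>M a b\<bar>"]) (auto intro: sum_nonneg)
  have "\<bar>mpow S M (Suc k) x y\<bar> \<le> (\<Sum>z\<in>S. \<bar>M x z\<bar> * \<bar>mpow S M k z y\<bar>)"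
    by (simp add: abs_mult[symmetric] sum_abs)
  also have "\<dots> \<le> (\<Sum>z\<in>S. \<bar>M x z\<bar> * abs_entry_sum S M ^ k)"
    by (intro sum_mono mult_left_mono Suc.IH) auto
  also have "\<dots> = (\<Sum>z\<in>S. \<bar>M x z\<bar>) * abs_entry_sum S M ^ k"
    by (simp add: sum_distrib_right)
  also have "\<dots> \<le> abs_entry_sum S M * abs_entry_sum S M ^ k"
    by (intro mult_right_mono row) (simp add: abs_entry_sum_nonneg)
  finally show ?case by simp
qed

lemma exp_term_summable:
  fixes C t :: real
  assumes "\<And>k. \<bar>u k\<bar> \<le> C ^ k"
  shows "summable (\<lambda>k. norm (t ^ k / fact k * u k))"
proof (rule summable_comparison_test'[where N=0])
  show "summable (\<lambda>k. inverse (fact k) * (\<bar>t\<bar> * C) ^ k)" by (rule summable_exp)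
  fix k :: nat
  have C: "C \<ge> 0" using assms[of 1] by simp
  have "norm (norm (t ^ k / fact k * u k)) = \<bar>t\<bar> ^ k / fact k * \<bar>u k\<bar>"
    by (simp add: abs_mult power_abs)
  also have "\<dots> \<le> \<bar>t\<bar> ^ k / fact k * C ^ k"
    by (intro mult_left_mono assms) auto
  also have "\<dots> = inverse (fact k) * (\<bar>t\<bar> * C) ^ k"
    by (simp add: power_mult_distrib field_simps)
  finally show "norm (norm (t ^ k / fact k * u k)) \<le> inverse (fact k) * (\<bar>t\<bar> * C) ^ k" .
qed

lemma mexp_summable:
  assumes "finite S" "x \<in> S"
  shows "summable (\<lambda>k. norm (t ^ k / fact k * mpow S M k x y))"
  by (rule exp_term_summable[where C="abs_entry_sum S M"]) (rule mpow_bound[OF assms])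

lemma mexp_sums:
  assumes "finite S" "x \<in> S"
  shows "(\<lambda>k. t ^ k / fact k * mpow S M k x y) sums mexp S M t x y"
  unfolding mexp_def using summable_norm_cancel[OF mexp_summable[OF assms]]
  by (simp add: summable_sums)

lemma mexp_zero:
  assumes "finite S" "x \<in> S"
  shows "mexp S M 0 x y = (if x = y then 1 else 0)"
proof -
  have "(\<lambda>k. (0::real) ^ k / fact k * mpow S M k x y) = (\<lambda>k. if k = 0 then (if x = y then 1 else 0) else 0)"
    by (auto simp: fun_eq_iff power_0_left)
  moreover have "(\<lambda>k::nat. if k = 0 then (if x = y then 1 else 0::real) else 0) sums (if x = y then 1 else 0)"
    by (rule sums_single)
  ultimately show ?thesis using mexp_sums[OF assms, of 0 M y] by (auto dest: sums_unique2)
qed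

lemma mpow_add:
  assumes "finite S" "x \<in> S"
  shows "mpow S M (i + j) x y = (\<Sum>z\<in>S. mpow S M i x z * mpow S M j z y)"
  using assms(2)
proof (induction i arbitrary: x)
  case 0
  have "(\<Sum>z\<in>S. (if x = z then 1 else 0) * mpow S M j z y) = (\<Sum>z\<in>S. if x = z then mpow S M j z y else 0)"
    by (intro sum.cong) auto
  also have "\<dots> = mpow S M j x y" using assms(1) 0 by simp
  finally show ?case by simp
next
  case (Suc i)
  have "mpow S M (Suc i + j) x y = (\<Sum>w\<in>S. M x w * mpow S M (i + j) w y)" by simp
  also have "\<dots> = (\<Sum>w\<in>S. M x w * (\<Sum>z\<in>S. mpow S M i w z * mpow S M j z y))"
    by (intro sum.cong refl) (simp add: Suc.IH)
  also have "\<dots> = (\<Sum>w\<in>S. \<Sum>z\<in>S. M x w * (mpow S M i w z * mpow S M j z y))"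
    by (simp add: sum_distrib_left)
  also have "\<dots> = (\<Sum>z\<in>S. \<Sum>w\<in>S. M x w * (mpow S M i w z * mpow S M j z y))"
    by (rule sum.swap)
  also have "\<dots> = (\<Sum>z\<in>S. (\<Sum>w\<in>S. M x w * mpow S M i w z) * mpow S M j z y)"
    by (simp add: sum_distrib_right mult.assoc)
  finally show ?case by simp
qed

lemma binomial_exp_coeff:
  fixes s t :: real
  shows "(\<Sum>i\<le>k. s ^ i / fact i * (t ^ (k - i) / fact (k - i))) = (s + t) ^ k / fact k"
proof -
  have "(s + t) ^ k / fact k = (\<Sum>i\<le>k. of_nat (k choose i) * s ^ i * t ^ (k - i)) / fact k"
    by (simp add: binomial_ring)
  also have "\<dots> = (\<Sum>i\<le>k. of_nat (k choose i) * s ^ i * t ^ (k - i) / fact k)"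
    by (simp add: sum_divide_distrib)
  also have "\<dots> = (\<Sum>i\<le>k. s ^ i / fact i * (t ^ (k - i) / fact (k - i)))"
    by (intro sum.cong refl) (simp add: binomial_fact field_simps)
  finally show ?thesis by simp
qed

lemma mexp_add:
  assumes "finite S" "x \<in> S"
  shows "mexp S M (s + t) x y = (\<Sum>z\<in>S. mexp S M s x z * mexp S M t z y)"
proof -
  let ?a = "\<lambda>z i. s ^ i / fact i * mpow S M i x z"
  let ?b = "\<lambda>z j. t ^ j / fact j * mpow S M j z y"
  have "\<And>z. z \<in> S \<Longrightarrow> (\<lambda>k. \<Sum>i\<le>k. ?a z i * ?b z (k - i)) sums (mexp S M s x z * mexp S M t z y)"
  proof -
    fix z assume z: "z \<in> S"
    have "(\<lambda>k. \<Sum>i\<le>k. ?a z i * ?b z (k - i)) sums ((\<Sum>k. ?a z k) * (\<Sum>k. ?b z k))"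
      by (rule Cauchy_product_sums[OF mexp_summable[OF assms] mexp_summable[OF assms(1) z]])
    then show "(\<lambda>k. \<Sum>i\<le>k. ?a z i * ?b z (k - i)) sums (mexp S M s x z * mexp S M t z y)"
      by (simp add: mexp_def)
  qed
  then have "(\<lambda>k. \<Sum>z\<in>S. \<Sum>i\<le>k. ?a z i * ?b z (k - i)) sums (\<Sum>z\<in>S. mexp S M s x z * mexp S M t z y)"
    by (rule sums_sum)
  moreover have "(\<lambda>k. \<Sum>z\<in>S. \<Sum>i\<le>k. ?a z i * ?b z (k - i)) = (\<lambda>k. (s + t) ^ k / fact k * mpow S M k x y)"
  proof
    fix k
    have "(\<Sum>z\<in>S. \<Sum>i\<le>k. ?a z i * ?b z (k - i))
        = (\<Sum>i\<le>k. (s ^ i / fact i * (t ^ (k - i) / fact (k - i))) * (\<Sum>z\<in>S. mpow S M i x z * mpow S M (k - i) z y))"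
      apply (subst sum.swap)
      apply (simp add: sum_distrib_left mult_ac)
      done
    also have "\<dots> = (\<Sum>i\<le>k. (s ^ i / fact i * (t ^ (k - i) / fact (k - i))) * mpow S M k x y)"
      by (intro sum.cong refl) (simp add: mpow_add[OF assms, symmetric])
    also have "\<dots> = (s + t) ^ k / fact k * mpow S M k x y"
      by (simp only: sum_distrib_right[symmetric] binomial_exp_coeff)
    finally show "(\<Sum>z\<in>S. \<Sum>i\<le>k. ?a z i * ?b z (k - i)) = (s + t) ^ k / fact k * mpow S M k x y" .
  qed
  ultimately show ?thesis using mexp_sums[OF assms, of "s + t" M y] by (auto dest: sums_unique2)
qed

lemma binomial_weighted_sum_Suc:
  fixes c :: real
  shows "(\<Sum>i\<le>Suc k. of_nat (Suc k choose i) * c ^ (Suc k - i) * a i)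
       = (\<Sum>i\<le>k. of_nat (k choose i) * c ^ (k - i) * a (Suc i)) + (\<Sum>i\<le>k. of_nat (k choose i) * c ^ (Suc k - i) * a i)"
proof -
  have h1: "(\<Sum>i\<le>Suc k. of_nat (Suc k choose i) * c ^ (Suc k - i) * a i)
      = c ^ Suc k * a 0 + (\<Sum>i\<le>k. of_nat (Suc k choose Suc i) * c ^ (k - i) * a (Suc i))"
    by (subst sum.atMost_Suc_shift) simp
  have h2: "(\<Sum>i\<le>k. of_nat (Suc k choose Suc i) * c ^ (k - i) * a (Suc i))
      = (\<Sum>i\<le>k. of_nat (k choose i) * c ^ (k - i) * a (Suc i)) + (\<Sum>i\<le>k. of_nat (k choose Suc i) * c ^ (k - i) * a (Suc i))"
    by (simp add: sum.distrib[symmetric] algebra_simps)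
  have h3: "(\<Sum>i\<le>k. of_nat (k choose i) * c ^ (Suc k - i) * a i)
      = (\<Sum>i\<le>Suc k. of_nat (k choose i) * c ^ (Suc k - i) * a i)"
    by simp
  have h4: "(\<Sum>i\<le>Suc k. of_nat (k choose i) * c ^ (Suc k - i) * a i) = c ^ Suc k * a 0 + (\<Sum>i\<le>k. of_nat (k choose Suc i) * c ^ (k - i) * a (Suc i))"
    by (subst sum.atMost_Suc_shift) simp
  show ?thesis using h1 h2 h3 h4 by linarith
qed

(* M + c I commutes with M, so exp (t (M + c I)) = e^(c t) exp (t M); a large enough c makes a
   Metzler matrix entrywise nonnegative, which is how positivity of exp (t M) is obtained. *)
definition diag_shift :: "('a \<Rightarrow> 'a \<Rightarrow> real) \<Rightarrow> real \<Rightarrow> 'a \<Rightarrow> 'a \<Rightarrow> real" where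
  "diag_shift M c a b = M a b + (if a = b then c else 0)"

lemma mpow_diag_shift:
  assumes "finite S" "x \<in> S"
  shows "mpow S (diag_shift M c) k x y = (\<Sum>i\<le>k. of_nat (k choose i) * c ^ (k - i) * mpow S M i x y)"
  using assms(2)
proof (induction k arbitrary: x)
  case 0
  then show ?case by simp
next
  case (Suc k)
  have "mpow S (diag_shift M c) (Suc k) x y = (\<Sum>z\<in>S. M x z * mpow S (diag_shift M c) k z y) + (\<Sum>z\<in>S. (if x = z then c else 0) * mpow S (diag_shift M c) k z y)"
    by (simp add: diag_shift_def distrib_right sum.distrib)
  also have "(\<Sum>z\<in>S. (if x = z then c else 0) * mpow S (diag_shift M c) k z y) = (\<Sum>z\<in>S. if x = z then c * mpow S (diag_shift M c) k z y else 0)"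
    by (intro sum.cong) auto
  also have "\<dots> = c * mpow S (diag_shift M c) k x y" using assms(1) Suc.prems by simp
  also have "c * mpow S (diag_shift M c) k x y = (\<Sum>i\<le>k. of_nat (k choose i) * c ^ (Suc k - i) * mpow S M i x y)"
    using Suc.prems by (simp add: Suc.IH sum_distrib_left Suc_diff_le mult_ac)
  also have "(\<Sum>z\<in>S. M x z * mpow S (diag_shift M c) k z y) = (\<Sum>z\<in>S. \<Sum>i\<le>k. M x z * (of_nat (k choose i) * c ^ (k - i) * mpow S M i z y))"
    by (intro sum.cong refl) (simp add: Suc.IH sum_distrib_left)
  also have "\<dots> = (\<Sum>i\<le>k. \<Sum>z\<in>S. M x z * (of_nat (k choose i) * c ^ (k - i) * mpow S M i z y))"
    by (rule sum.swap)
  also have "\<dots> = (\<Sum>i\<le>k. of_nat (k choose i) * c ^ (k - i) * mpow S M (Suc i) x y)"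
    by (intro sum.cong refl) (simp add: sum_distrib_left mult_ac)
  finally show ?case by (simp only: binomial_weighted_sum_Suc)
qed

lemma mexp_diag_shift:
  assumes "finite S" "x \<in> S"
  shows "mexp S (diag_shift M c) t x y = exp (c * t) * mexp S M t x y"
proof -
  let ?a = "\<lambda>i. t ^ i / fact i * mpow S M i x y"
  let ?b = "\<lambda>j. t ^ j / fact j * c ^ j"
  have sa: "summable (\<lambda>k. norm (?a k))" by (rule mexp_summable[OF assms])
  have sb: "summable (\<lambda>k. norm (?b k))"
    by (rule exp_term_summable[where C="\<bar>c\<bar>"]) (simp add: power_abs)
  have "(\<lambda>k. \<Sum>i\<le>k. ?a i * ?b (k - i)) sums ((\<Sum>k. ?a k) * (\<Sum>k. ?b k))"
    by (rule Cauchy_product_sums[OF sa sb])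
  moreover have "(\<Sum>k. ?b k) = exp (c * t)"
  proof -
    have "(\<lambda>n. (c * t) ^ n /\<^sub>R fact n) sums exp (c * t)" by (rule exp_converges)
    moreover have "(\<lambda>n. (c * t) ^ n /\<^sub>R fact n) = ?b"
      by (auto simp: fun_eq_iff power_mult_distrib field_simps)
    ultimately show ?thesis by (simp add: sums_iff)
  qed
  moreover have "(\<lambda>k. \<Sum>i\<le>k. ?a i * ?b (k - i)) = (\<lambda>k. t ^ k / fact k * mpow S (diag_shift M c) k x y)"
  proof
    fix k
    have "t ^ k / fact k * mpow S (diag_shift M c) k x y = (\<Sum>i\<le>k. t ^ k / fact k * (of_nat (k choose i) * c ^ (k - i) * mpow S M i x y))"
      by (simp add: mpow_diag_shift[OF assms] sum_distrib_left)
    also have "\<dots> = (\<Sum>i\<le>k. ?a i * ?b (k - i))"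
    proof (intro sum.cong refl)
      fix i assume "i \<in> {..k}"
      then have ik: "i \<le> k" by simp
      have tk: "t ^ k = t ^ i * t ^ (k - i)" using ik by (simp add: power_add[symmetric])
      show "t ^ k / fact k * (of_nat (k choose i) * c ^ (k - i) * mpow S M i x y) = ?a i * ?b (k - i)"
        using ik by (simp add: binomial_fact tk field_simps)
    qed
    finally show "(\<Sum>i\<le>k. ?a i * ?b (k - i)) = t ^ k / fact k * mpow S (diag_shift M c) k x y" by simp
  qed
  ultimately have "(\<lambda>k. t ^ k / fact k * mpow S (diag_shift M c) k x y) sums (mexp S M t x y * exp (c * t))"
    by (simp add: mexp_def)
  with mexp_sums[OF assms, of t "diag_shift M c" y] show ?thesis
    by (auto dest: sums_unique2 simp: mult.commute)
qed

lemma mpow_nonneg: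
  assumes "\<forall>a\<in>S. \<forall>b\<in>S. M a b \<ge> 0" "x \<in> S"
  shows "mpow S M k x y \<ge> 0"
  using assms(2)
proof (induction k arbitrary: x)
  case (Suc k)
  then show ?case using assms(1) by (auto intro!: sum_nonneg)
qed simp

lemma mexp_nonneg_of_nonneg:
  assumes "finite S" "\<forall>a\<in>S. \<forall>b\<in>S. M a b \<ge> 0" "x \<in> S" "t \<ge> 0"
  shows "mexp S M t x y \<ge> 0"
  unfolding mexp_def
  by (intro suminf_nonneg summable_norm_cancel[OF mexp_summable[OF assms(1,3)]] mult_nonneg_nonneg
      mpow_nonneg[OF assms(2,3)]) (use assms(4) in auto)

definition metzler :: "'a set \<Rightarrow> ('a \<Rightarrow> 'a \<Rightarrow> real) \<Rightarrow> bool" where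
  "metzler S M = (\<forall>a\<in>S. \<forall>b\<in>S. a \<noteq> b \<longrightarrow> M a b \<ge> 0)"

definition abs_diag_sum :: "'a set \<Rightarrow> ('a \<Rightarrow> 'a \<Rightarrow> real) \<Rightarrow> real" where
  "abs_diag_sum S M = (\<Sum>a\<in>S. \<bar>M a a\<bar>)"

lemma diag_shift_nonneg:
  assumes "finite S" "metzler S M" "S' \<subseteq> S"
  shows "\<forall>a\<in>S'. \<forall>b\<in>S'. diag_shift M (abs_diag_sum S M) a b \<ge> 0"
proof (intro ballI)
  fix a b assume a: "a \<in> S'" and b: "b \<in> S'"
  show "diag_shift M (abs_diag_sum S M) a b \<ge> 0"
  proof (cases "a = b")
    case True
    have "\<bar>M a a\<bar> \<le> abs_diag_sum S M" unfolding abs_diag_sum_def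
      using a assms by (intro member_le_sum) auto
    then show ?thesis using True by (simp add: diag_shift_def)
  next
    case False
    then show ?thesis using a b assms by (auto simp: diag_shift_def metzler_def)
  qed
qed

lemma mexp_via_diag_shift:
  assumes "finite S" "x \<in> S"
  shows "mexp S M t x y = exp (- (c * t)) * mexp S (diag_shift M c) t x y"
  by (simp add: mexp_diag_shift[OF assms] exp_minus field_simps)

lemma mexp_metzler_nonneg:
  assumes "finite S" "metzler S M" "x \<in> S" "t \<ge> 0"
  shows "mexp S M t x y \<ge> 0"
  using mexp_nonneg_of_nonneg[OF assms(1) diag_shift_nonneg[OF assms(1,2) order_refl] assms(3,4)]
  by (simp add: mexp_via_diag_shift[OF assms(1,3), of M t y "abs_diag_sum S M"])

lemma mpow_mono_set:
  assumes "\<forall>a\<in>S'. \<forall>b\<in>S'. M a b \<ge> 0" "S \<subseteq> S'" "finite S'" "x \<in> S'"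
  shows "mpow S M k x y \<le> mpow S' M k x y"
  using assms(4)
proof (induction k arbitrary: x)
  case (Suc k)
  have "(\<Sum>z\<in>S. M x z * mpow S M k z y) \<le> (\<Sum>z\<in>S. M x z * mpow S' M k z y)"
    using Suc assms by (intro sum_mono mult_left_mono) auto
  also have "\<dots> \<le> (\<Sum>z\<in>S'. M x z * mpow S' M k z y)"
    using Suc.prems assms by (intro sum_mono2 mult_nonneg_nonneg mpow_nonneg[OF assms(1)]) auto
  finally show ?case by simp
qed simp

lemma mexp_mono_set:
  assumes "finite S'" "S \<subseteq> S'" "metzler S' M" "x \<in> S" "t \<ge> 0"
  shows "mexp S M t x y \<le> mexp S' M t x y"
proof -
  let ?c = "abs_diag_sum S' M"
  have fS: "finite S" using assms finite_subset by auto
  have xS': "x \<in> S'" using assms by auto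
  have nn: "\<forall>a\<in>S'. \<forall>b\<in>S'. diag_shift M ?c a b \<ge> 0" by (rule diag_shift_nonneg[OF assms(1,3) order_refl])
  have "mexp S (diag_shift M ?c) t x y \<le> mexp S' (diag_shift M ?c) t x y"
    unfolding mexp_def
    by (intro suminf_le summable_norm_cancel[OF mexp_summable] mult_left_mono
        mpow_mono_set[OF nn assms(2,1) xS'] fS assms(1,4) xS') (use assms(5) in auto)
  then show ?thesis
    by (simp add: mexp_via_diag_shift[OF fS assms(4), of M t y ?c] mexp_via_diag_shift[OF assms(1) xS', of M t y ?c])
qed

definition pos_edges :: "'a set \<Rightarrow> ('a \<Rightarrow> 'a \<Rightarrow> real) \<Rightarrow> ('a \<times> 'a) set" where
  "pos_edges S M = {(a, b). a \<in> S \<and> b \<in> S \<and> a \<noteq> b \<and> M a b > 0}"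

lemma mpow_path_pos:
  assumes "\<forall>a\<in>S. \<forall>b\<in>S. M a b \<ge> 0" "finite S" "(x, y) \<in> (pos_edges S M)\<^sup>*" "y \<in> S"
  shows "\<exists>k. mpow S M k x y > 0"
  using assms(3)
proof (induction rule: converse_rtrancl_induct)
  case base
  then show ?case by (intro exI[of _ 0]) simp
next
  case (step x z)
  then obtain k where k: "mpow S M k z y > 0" by auto
  have e: "x \<in> S" "z \<in> S" "M x z > 0" using step(1) by (auto simp: pos_edges_def)
  have "0 < M x z * mpow S M k z y" using e k by simp
  also have "\<dots> \<le> (\<Sum>w\<in>S. M x w * mpow S M k w y)"
    using e assms by (intro member_le_sum[where f="\<lambda>w. M x w * mpow S M k w y"] mult_nonneg_nonneg mpow_nonneg) auto
  finally show ?case by (intro exI[of _ "Suc k"]) simp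
qed

lemma mexp_path_pos:
  assumes "finite S" "metzler S M" "(x, y) \<in> (pos_edges S M)\<^sup>*" "x \<in> S" "y \<in> S" "t > 0"
  shows "mexp S M t x y > 0"
proof -
  let ?c = "abs_diag_sum S M"
  have nn: "\<forall>a\<in>S. \<forall>b\<in>S. diag_shift M ?c a b \<ge> 0" by (rule diag_shift_nonneg[OF assms(1,2) order_refl])
  have "pos_edges S M \<subseteq> pos_edges S (diag_shift M ?c)" by (auto simp: pos_edges_def diag_shift_def)
  then have "(x, y) \<in> (pos_edges S (diag_shift M ?c))\<^sup>*" using assms(3) rtrancl_mono by blast
  then obtain k where k: "mpow S (diag_shift M ?c) k x y > 0"
    using mpow_path_pos[OF nn assms(1) _ assms(5)] by blast
  have "0 < t ^ k / fact k * mpow S (diag_shift M ?c) k x y" using k assms(6) by simp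
  also have "\<dots> = (\<Sum>i\<in>{k}. t ^ i / fact i * mpow S (diag_shift M ?c) i x y)" by simp
  also have "\<dots> \<le> mexp S (diag_shift M ?c) t x y"
    unfolding mexp_def
    by (intro sum_le_suminf summable_norm_cancel[OF mexp_summable] assms(1,4) ballI mult_nonneg_nonneg
        mpow_nonneg[OF nn]) (use assms(6) in auto)
  finally show ?thesis by (simp add: mexp_via_diag_shift[OF assms(1,4), of M t y ?c])
qed

lemma exp_series_taylor2:
  fixes u :: "nat \<Rightarrow> real"
  assumes u: "\<And>k. \<bar>u k\<bar> \<le> C ^ k" and h: "h \<ge> 0"
  shows "\<bar>(\<Sum>k. h ^ k / fact k * u k) - u 0 - h * u 1\<bar> \<le> (h * C) ^ 2 * exp (h * C)"
proof -
  let ?f = "\<lambda>k. h ^ k / fact k * u k"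
  have C: "C \<ge> 0" using u[of 1] by simp
  have sf: "summable ?f" by (rule summable_norm_cancel[OF exp_term_summable[OF u]])
  have split: "(\<Sum>k. ?f k) = (\<Sum>n. ?f (n + 2)) + sum ?f {..<2}"
    by (rule suminf_split_initial_segment[OF sf])
  have s2: "sum ?f {..<2} = u 0 + h * u 1" by (simp add: numeral_2_eq_2)
  have sn: "summable (\<lambda>n. norm (?f (n + 2)))"
    using exp_term_summable[OF u, of h] by (subst summable_iff_shift) simp
  have g: "(\<lambda>n. (h * C) ^ 2 * ((h * C) ^ n /\<^sub>R fact n)) sums ((h * C) ^ 2 * exp (h * C))"
    by (intro sums_mult exp_converges)
  have "\<bar>\<Sum>n. ?f (n + 2)\<bar> \<le> (\<Sum>n. norm (?f (n + 2)))"
    using summable_norm[OF sn] by simp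
  also have "\<dots> \<le> (\<Sum>n. (h * C) ^ 2 * ((h * C) ^ n /\<^sub>R fact n))"
  proof (rule suminf_le[OF _ sn sums_summable[OF g]])
    fix n
    have f1: "fact n \<le> (fact (n + 2) :: real)" by (intro fact_mono) simp
    have "norm (?f (n + 2)) = h ^ (n + 2) / fact (n + 2) * \<bar>u (n + 2)\<bar>"
      using h by (simp add: abs_mult)
    also have "\<dots> \<le> h ^ (n + 2) / fact (n + 2) * C ^ (n + 2)"
      using h by (intro mult_left_mono u) auto
    also have "\<dots> \<le> h ^ (n + 2) / fact n * C ^ (n + 2)"
      using h C f1 by (intro mult_right_mono divide_left_mono) (auto simp: fact_gt_zero)
    also have "\<dots> = (h * C) ^ 2 * ((h * C) ^ n /\<^sub>R fact n)"
      by (simp add: power_add power_mult_distrib field_simps power2_eq_square)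
    finally show "norm (?f (n + 2)) \<le> (h * C) ^ 2 * ((h * C) ^ n /\<^sub>R fact n)" .
  qed
  also have "\<dots> = (h * C) ^ 2 * exp (h * C)" using g by (simp add: sums_iff)
  finally show ?thesis using split s2 by simp
qed

section \<open>Finite Markov chains killed on a set\<close>

lemma sum_swap_mult:
  fixes a :: "'a \<Rightarrow> real"
  shows "(\<Sum>x\<in>X. a x * (\<Sum>z\<in>Z. b x z * c z)) = (\<Sum>z\<in>Z. (\<Sum>x\<in>X. a x * b x z) * c z)"
proof -
  have "(\<Sum>x\<in>X. a x * (\<Sum>z\<in>Z. b x z * c z)) = (\<Sum>x\<in>X. \<Sum>z\<in>Z. a x * b x z * c z)"
    by (simp add: sum_distrib_left mult_ac)
  also have "\<dots> = (\<Sum>z\<in>Z. \<Sum>x\<in>X. a x * b x z * c z)" by (rule sum.swap)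
  also have "\<dots> = (\<Sum>z\<in>Z. (\<Sum>x\<in>X. a x * b x z) * c z)" by (simp add: sum_distrib_right)
  finally show ?thesis .
qed

locale stationary_chain =
  fixes \<Omega> :: "'a set" and R :: "'a \<Rightarrow> 'a \<Rightarrow> real" and \<nu> :: "'a \<Rightarrow> real" and A :: "'a set"
  assumes fin: "finite \<Omega>"
    and rates: "valid_rates \<Omega> R"
    and stat: "stationary \<Omega> R \<nu>"
    and Asub: "A \<subseteq> \<Omega>"
begin

abbreviation "L \<equiv> generator \<Omega> R"
abbreviation "B \<equiv> \<Omega> - A"
abbreviation "P \<equiv> semigroup \<Omega> R"
abbreviation "K \<equiv> killed_semigroup \<Omega> R A"

lemma finite_B: "finite B" using fin by simp

lemma L_metzler: "metzler \<Omega> L"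
  using rates by (auto simp: metzler_def valid_rates_def generator_def)

lemma nu_nonneg: "x \<in> \<Omega> \<Longrightarrow> \<nu> x \<ge> 0" using stat by (auto simp: stationary_def)
lemma nu_sum: "sum \<nu> \<Omega> = 1" using stat by (auto simp: stationary_def)
lemma nu_generator: "y \<in> \<Omega> \<Longrightarrow> (\<Sum>x\<in>\<Omega>. \<nu> x * L x y) = 0" using stat by (auto simp: stationary_def)

lemma generator_row_sum: assumes "x \<in> \<Omega>" shows "(\<Sum>y\<in>\<Omega>. L x y) = 0"
proof -
  have "(\<Sum>y\<in>\<Omega>. L x y) = L x x + (\<Sum>y\<in>\<Omega> - {x}. L x y)"
    using assms fin by (simp add: sum.remove)
  also have "(\<Sum>y\<in>\<Omega> - {x}. L x y) = (\<Sum>y\<in>\<Omega> - {x}. R x y)"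
    by (intro sum.cong) (auto simp: generator_def)
  finally show ?thesis by (simp add: generator_def)
qed

lemma mpow_generator_row_sum: assumes "x \<in> \<Omega>" shows "(\<Sum>y\<in>\<Omega>. mpow \<Omega> L k x y) = (if k = 0 then 1 else 0)"
  using assms
proof (induction k arbitrary: x)
  case 0 then show ?case using fin by simp
next
  case (Suc k)
  have "(\<Sum>y\<in>\<Omega>. mpow \<Omega> L (Suc k) x y) = (\<Sum>y\<in>\<Omega>. \<Sum>z\<in>\<Omega>. L x z * mpow \<Omega> L k z y)"
    by simp
  also have "\<dots> = (\<Sum>z\<in>\<Omega>. \<Sum>y\<in>\<Omega>. L x z * mpow \<Omega> L k z y)" by (rule sum.swap)
  also have "\<dots> = (\<Sum>z\<in>\<Omega>. L x z * (\<Sum>y\<in>\<Omega>. mpow \<Omega> L k z y))"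
    by (simp add: sum_distrib_left)
  also have "\<dots> = (\<Sum>z\<in>\<Omega>. L x z * (if k = 0 then 1 else 0))"
    by (intro sum.cong refl) (simp add: Suc.IH)
  also have "\<dots> = 0" using generator_row_sum[OF Suc.prems] by (simp add: sum_distrib_right[symmetric])
  finally show ?case by simp
qed

lemma mpow_one: assumes "x \<in> S" "finite S" shows "mpow S M (Suc 0) x y = (if y \<in> S then M x y else 0)"
proof -
  have "mpow S M (Suc 0) x y = (\<Sum>z\<in>S. if z = y then M x y else 0)"
    by (simp, intro sum.cong) auto
  then show ?thesis using assms by simp
qed

lemma nu_mpow_generator: assumes "y \<in> \<Omega>" shows "(\<Sum>x\<in>\<Omega>. \<nu> x * mpow \<Omega> L k x y) = (if k = 0 then \<nu> y else 0)"
  using assms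
proof (induction k arbitrary: y)
  case 0
  have "(\<Sum>x\<in>\<Omega>. \<nu> x * mpow \<Omega> L 0 x y) = (\<Sum>x\<in>\<Omega>. if x = y then \<nu> y else 0)"
    by (intro sum.cong) auto
  then show ?case using fin 0 by simp
next
  case (Suc j)
  have "(\<Sum>x\<in>\<Omega>. \<nu> x * mpow \<Omega> L (Suc j) x y) = (\<Sum>x\<in>\<Omega>. \<nu> x * (\<Sum>z\<in>\<Omega>. mpow \<Omega> L j x z * L z y))"
  proof (intro sum.cong refl arg_cong[where f="\<lambda>v. \<nu> _ * v"])
    fix x assume x: "x \<in> \<Omega>"
    have "mpow \<Omega> L (j + Suc 0) x y = (\<Sum>z\<in>\<Omega>. mpow \<Omega> L j x z * mpow \<Omega> L (Suc 0) z y)"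
      by (rule mpow_add[OF fin x])
    also have "\<dots> = (\<Sum>z\<in>\<Omega>. mpow \<Omega> L j x z * L z y)"
      by (intro sum.cong refl) (metis mpow_one fin Suc.prems)
    finally show "mpow \<Omega> L (Suc j) x y = (\<Sum>z\<in>\<Omega>. mpow \<Omega> L j x z * L z y)" by simp
  qed
  also have "\<dots> = (\<Sum>z\<in>\<Omega>. (\<Sum>x\<in>\<Omega>. \<nu> x * mpow \<Omega> L j x z) * L z y)"
    by (rule sum_swap_mult)
  also have "\<dots> = (\<Sum>z\<in>\<Omega>. (if j = 0 then \<nu> z else 0) * L z y)"
    by (intro sum.cong refl) (simp add: Suc.IH)
  also have "\<dots> = 0" using nu_generator[OF Suc.prems] by (cases "j = 0") auto
  finally show ?case by simp
qed

lemma exp_series_delta: "(\<Sum>k. t ^ k / fact k * (if k = 0 then c else 0)) = (c::real)"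
proof -
  have "(\<lambda>k. t ^ k / fact k * (if k = 0 then c else 0)) = (\<lambda>k. if k = 0 then c else 0)"
    by (auto simp: fun_eq_iff)
  moreover have "(\<lambda>k::nat. if k = 0 then c else 0) sums c" using sums_single[of 0 "\<lambda>_. c"] by simp
  ultimately show ?thesis by (simp add: sums_iff)
qed

lemma P_row: assumes "x \<in> \<Omega>" shows "(\<Sum>y\<in>\<Omega>. P t x y) = 1"
proof -
  have "(\<Sum>y\<in>\<Omega>. P t x y) = (\<Sum>y\<in>\<Omega>. \<Sum>k. t ^ k / fact k * mpow \<Omega> L k x y)"
    by (simp add: semigroup_def mexp_def)
  also have "\<dots> = (\<Sum>k. \<Sum>y\<in>\<Omega>. t ^ k / fact k * mpow \<Omega> L k x y)"
    by (rule suminf_sum[symmetric]) (rule summable_norm_cancel[OF mexp_summable[OF fin assms]])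
  also have "\<dots> = (\<Sum>k. t ^ k / fact k * (if k = 0 then 1 else 0))"
    by (intro arg_cong[where f=suminf] ext) (simp only: sum_distrib_left[symmetric] mpow_generator_row_sum[OF assms])
  finally show ?thesis by (simp only: exp_series_delta)
qed

lemma P_stat: assumes "y \<in> \<Omega>" shows "(\<Sum>x\<in>\<Omega>. \<nu> x * P t x y) = \<nu> y"
proof -
  have "(\<Sum>x\<in>\<Omega>. \<nu> x * P t x y) = (\<Sum>x\<in>\<Omega>. \<Sum>k. \<nu> x * (t ^ k / fact k * mpow \<Omega> L k x y))"
  proof (intro sum.cong refl)
    fix x assume x: "x \<in> \<Omega>"
    show "\<nu> x * P t x y = (\<Sum>k. \<nu> x * (t ^ k / fact k * mpow \<Omega> L k x y))"
      unfolding semigroup_def mexp_def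
      by (rule suminf_mult[symmetric], rule summable_norm_cancel[OF mexp_summable[OF fin x]])
  qed
  also have "\<dots> = (\<Sum>k. \<Sum>x\<in>\<Omega>. \<nu> x * (t ^ k / fact k * mpow \<Omega> L k x y))"
    by (rule suminf_sum[symmetric]) (intro summable_mult summable_norm_cancel[OF mexp_summable[OF fin]], simp)
  also have "\<dots> = (\<Sum>k. t ^ k / fact k * (if k = 0 then \<nu> y else 0))"
  proof (intro arg_cong[where f=suminf] ext)
    fix k
    have "(\<Sum>x\<in>\<Omega>. \<nu> x * (t ^ k / fact k * mpow \<Omega> L k x y)) = t ^ k / fact k * (\<Sum>x\<in>\<Omega>. \<nu> x * mpow \<Omega> L k x y)"
      by (simp add: sum_distrib_left mult_ac)
    then show "(\<Sum>x\<in>\<Omega>. \<nu> x * (t ^ k / fact k * mpow \<Omega> L k x y)) = t ^ k / fact k * (if k = 0 then \<nu> y else 0)"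
      by (simp only: nu_mpow_generator[OF assms])
  qed
  finally show ?thesis by (simp only: exp_series_delta)
qed

lemma P_add: "x \<in> \<Omega> \<Longrightarrow> P (s + t) x y = (\<Sum>z\<in>\<Omega>. P s x z * P t z y)"
  unfolding semigroup_def by (rule mexp_add[OF fin])

lemma K_add: "x \<in> B \<Longrightarrow> K (s + t) x y = (\<Sum>z\<in>B. K s x z * K t z y)"
  unfolding killed_semigroup_def by (rule mexp_add[OF finite_B])

lemma P_nonneg: "x \<in> \<Omega> \<Longrightarrow> t \<ge> 0 \<Longrightarrow> P t x y \<ge> 0"
  unfolding semigroup_def by (rule mexp_metzler_nonneg[OF fin L_metzler])

lemma L_metzler_B: "metzler B L" using L_metzler by (auto simp: metzler_def)

lemma K_nonneg: "x \<in> B \<Longrightarrow> t \<ge> 0 \<Longrightarrow> K t x y \<ge> 0"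
  unfolding killed_semigroup_def by (rule mexp_metzler_nonneg[OF finite_B L_metzler_B])

lemma K_le_P: "x \<in> B \<Longrightarrow> t \<ge> 0 \<Longrightarrow> K t x y \<le> P t x y"
  unfolding killed_semigroup_def semigroup_def by (rule mexp_mono_set[OF fin _ L_metzler]) auto

lemma P_le1: assumes "x \<in> \<Omega>" "t \<ge> 0" "y \<in> \<Omega>" shows "P t x y \<le> 1"
proof -
  have "P t x y \<le> (\<Sum>y\<in>\<Omega>. P t x y)"
    using assms fin by (intro member_le_sum[where f="P t x"] P_nonneg) auto
  then show ?thesis using P_row[OF assms(1)] by simp
qed

(* surv_from t x = P_x[H_A > t] and killed_mass s z = P_nu[eta(s) = z, H_A > s]. *)
abbreviation "surv_from t x \<equiv> (\<Sum>y\<in>B. K t x y)"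
abbreviation "Surv \<equiv> survival \<Omega> R \<nu> A"

lemma Surv_eq: "Surv t = (\<Sum>x\<in>B. \<nu> x * surv_from t x)" by (simp add: survival_def)

lemma surv_from_nonneg: "x \<in> B \<Longrightarrow> t \<ge> 0 \<Longrightarrow> surv_from t x \<ge> 0"
  by (intro sum_nonneg K_nonneg)

lemma surv_from_le1: assumes "x \<in> B" "t \<ge> 0" shows "surv_from t x \<le> 1"
proof -
  have "surv_from t x \<le> (\<Sum>y\<in>B. P t x y)" using assms by (intro sum_mono K_le_P) auto
  also have "\<dots> \<le> (\<Sum>y\<in>\<Omega>. P t x y)" using assms fin by (intro sum_mono2 P_nonneg) auto
  finally show ?thesis using P_row assms by auto
qed

lemma nu_K_le: assumes "z \<in> B" "t \<ge> 0" shows "(\<Sum>x\<in>B. \<nu> x * K t x z) \<le> \<nu> z"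
proof -
  have "(\<Sum>x\<in>B. \<nu> x * K t x z) \<le> (\<Sum>x\<in>B. \<nu> x * P t x z)"
    using assms by (intro sum_mono mult_left_mono K_le_P nu_nonneg) auto
  also have "\<dots> \<le> (\<Sum>x\<in>\<Omega>. \<nu> x * P t x z)"
    using assms fin by (intro sum_mono2 mult_nonneg_nonneg P_nonneg nu_nonneg) auto
  finally show ?thesis using P_stat assms by auto
qed

lemma surv_from_add: assumes "x \<in> B" shows "surv_from (s + t) x = (\<Sum>z\<in>B. K s x z * surv_from t z)"
proof -
  have "surv_from (s + t) x = (\<Sum>y\<in>B. \<Sum>z\<in>B. K s x z * K t z y)" by (simp add: K_add[OF assms])
  also have "\<dots> = (\<Sum>z\<in>B. \<Sum>y\<in>B. K s x z * K t z y)" by (rule sum.swap)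
  also have "\<dots> = (\<Sum>z\<in>B. K s x z * surv_from t z)" by (simp add: sum_distrib_left)
  finally show ?thesis .
qed

abbreviation "killed_mass s z \<equiv> (\<Sum>x\<in>B. \<nu> x * K s x z)"

lemma Surv_add: "Surv (s + t) = (\<Sum>z\<in>B. killed_mass s z * surv_from t z)"
proof -
  have "Surv (s + t) = (\<Sum>x\<in>B. \<nu> x * (\<Sum>z\<in>B. K s x z * surv_from t z))"
    by (simp add: Surv_eq surv_from_add)
  also have "\<dots> = (\<Sum>z\<in>B. killed_mass s z * surv_from t z)" by (rule sum_swap_mult)
  finally show ?thesis .
qed

lemma Surv_killed_mass: "Surv s = (\<Sum>z\<in>B. killed_mass s z)"
proof -
  have "Surv s = (\<Sum>x\<in>B. \<nu> x * (\<Sum>z\<in>B. K s x z * 1))" by (simp add: Surv_eq)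
  also have "\<dots> = (\<Sum>z\<in>B. killed_mass s z * 1)" by (rule sum_swap_mult)
  finally show ?thesis by simp
qed

lemma killed_mass_nonneg: "t \<ge> 0 \<Longrightarrow> killed_mass t z \<ge> 0"
  by (intro sum_nonneg mult_nonneg_nonneg nu_nonneg K_nonneg) auto

lemma Surv_0: "Surv 0 = sum \<nu> B"
proof -
  have "surv_from 0 x = 1" if "x \<in> B" for x
  proof -
    have "surv_from 0 x = (\<Sum>y\<in>B. if x = y then 1 else 0)"
      unfolding killed_semigroup_def using that by (intro sum.cong refl mexp_zero[OF finite_B])
    then show ?thesis using that finite_B by simp
  qed
  then show ?thesis by (simp add: Surv_eq)
qed

lemma Surv_nonneg: "t \<ge> 0 \<Longrightarrow> Surv t \<ge> 0"
  unfolding Surv_eq by (intro sum_nonneg mult_nonneg_nonneg nu_nonneg surv_from_nonneg) auto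

lemma Surv_mono_add: assumes "s \<ge> 0" "t \<ge> 0" shows "Surv (s + t) \<le> Surv s"
proof -
  have "Surv (s + t) \<le> (\<Sum>z\<in>B. killed_mass s z)" unfolding Surv_add
    using assms by (intro sum_mono mult_right_le_one_le killed_mass_nonneg surv_from_nonneg surv_from_le1) auto
  then show ?thesis by (simp add: Surv_killed_mass)
qed

lemma Surv_antimono: "0 \<le> s \<Longrightarrow> s \<le> t \<Longrightarrow> Surv t \<le> Surv s"
  using Surv_mono_add[of s "t - s"] by simp

lemma Surv_loss_subadd: assumes "s \<ge> 0" "t \<ge> 0"
  shows "sum \<nu> B - Surv (s + t) \<le> (sum \<nu> B - Surv s) + (sum \<nu> B - Surv t)"
proof -
  have "sum \<nu> B - Surv (s + t) = (sum \<nu> B - Surv s) + (\<Sum>z\<in>B. killed_mass s z * (1 - surv_from t z))"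
  proof -
    have e1: "Surv (s + t) = (\<Sum>z\<in>B. killed_mass s z * surv_from t z)" by (rule Surv_add)
    have e2: "Surv s = (\<Sum>z\<in>B. killed_mass s z)" by (rule Surv_killed_mass)
    have e3: "(\<Sum>z\<in>B. killed_mass s z * (1 - surv_from t z)) = (\<Sum>z\<in>B. killed_mass s z) - (\<Sum>z\<in>B. killed_mass s z * surv_from t z)"
      by (simp add: algebra_simps sum_subtractf)
    show ?thesis using e1 e2 e3 by linarith
  qed
  also have "(\<Sum>z\<in>B. killed_mass s z * (1 - surv_from t z)) \<le> (\<Sum>z\<in>B. \<nu> z * (1 - surv_from t z))"
    using assms by (intro sum_mono mult_right_mono nu_K_le) (auto simp: surv_from_le1)
  also have "\<dots> = sum \<nu> B - Surv t" by (simp add: Surv_eq algebra_simps sum_subtractf)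
  finally show ?thesis by simp
qed

abbreviation "flux \<equiv> (\<Sum>x\<in>B. \<nu> x * (\<Sum>y\<in>A. R x y))"
abbreviation "CB \<equiv> abs_entry_sum B L"

lemma R_A_nonneg: assumes "x \<in> B" "y \<in> A" shows "R x y \<ge> 0"
proof -
  have "x \<noteq> y" using assms by auto
  then show ?thesis using rates Asub assms by (auto simp: valid_rates_def)
qed

lemma flux_nonneg: "flux \<ge> 0"
  by (intro sum_nonneg mult_nonneg_nonneg nu_nonneg R_A_nonneg) auto

lemma K_short_time: assumes "x \<in> B" "y \<in> B" "h \<ge> 0"
  shows "K h x y \<ge> (if x = y then 1 else 0) + h * L x y - (h * CB) ^ 2 * exp (h * CB)"
proof -
  have t: "\<bar>K h x y - mpow B L 0 x y - h * mpow B L 1 x y\<bar> \<le> (h * CB) ^ 2 * exp (h * CB)"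
    unfolding killed_semigroup_def mexp_def
    by (rule exp_series_taylor2[OF mpow_bound[OF finite_B assms(1)] assms(3)])
  have "mpow B L 1 x y = L x y" using mpow_one[OF assms(1) finite_B, of L y] assms(2) by simp
  then show ?thesis using t by (simp split: if_splits) linarith?
qed

lemma surv_from_short_time: assumes "x \<in> B" "h \<ge> 0"
  shows "1 - surv_from h x \<le> h * (\<Sum>y\<in>A. R x y) + card B * ((h * CB) ^ 2 * exp (h * CB))"
proof -
  let ?E = "(h * CB) ^ 2 * exp (h * CB)"
  have "surv_from h x \<ge> (\<Sum>y\<in>B. (if x = y then 1 else 0) + h * L x y - ?E)"
    using assms by (intro sum_mono K_short_time) auto
  also have "(\<Sum>y\<in>B. (if x = y then 1 else 0) + h * L x y - ?E) = 1 + h * (\<Sum>y\<in>B. L x y) - card B * ?E"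
    using assms finite_B by (simp add: sum.distrib sum_subtractf sum_distrib_left)
  also have "(\<Sum>y\<in>B. L x y) = - (\<Sum>y\<in>A. R x y)"
  proof -
    have "(\<Sum>y\<in>\<Omega>. L x y) = (\<Sum>y\<in>B. L x y) + (\<Sum>y\<in>A. L x y)"
      using fin Asub by (metis Diff_partition Diff_disjoint finite_Diff finite_subset sum.union_disjoint add.commute inf_commute)
    moreover have "(\<Sum>y\<in>A. L x y) = (\<Sum>y\<in>A. R x y)"
      using assms by (intro sum.cong refl) (auto simp: generator_def)
    ultimately show ?thesis using generator_row_sum assms by auto
  qed
  finally show ?thesis by simp
qed

lemma Surv_loss_short_time: assumes "h \<ge> 0"
  shows "sum \<nu> B - Surv h \<le> h * flux + card B * ((h * CB) ^ 2 * exp (h * CB))"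
proof -
  let ?E = "card B * ((h * CB) ^ 2 * exp (h * CB))"
  have E: "?E \<ge> 0" by simp
  have "sum \<nu> B - Surv h = (\<Sum>x\<in>B. \<nu> x * (1 - surv_from h x))"
    by (simp add: Surv_eq algebra_simps sum_subtractf)
  also have "\<dots> \<le> (\<Sum>x\<in>B. \<nu> x * (h * (\<Sum>y\<in>A. R x y) + ?E))"
    using assms by (intro sum_mono mult_left_mono surv_from_short_time nu_nonneg) auto
  also have "\<dots> = h * flux + sum \<nu> B * ?E"
    by (simp add: algebra_simps sum.distrib sum_distrib_left sum_distrib_right)
  also have "sum \<nu> B * ?E \<le> 1 * ?E"
  proof (rule mult_right_mono[OF _ E])
    have "sum \<nu> B \<le> sum \<nu> \<Omega>" using fin by (intro sum_mono2 nu_nonneg) auto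
    then show "sum \<nu> B \<le> 1" using nu_sum by simp
  qed
  finally show ?thesis by simp
qed

lemma Surv_loss_mult: assumes "u \<ge> 0" shows "sum \<nu> B - Surv (real n * u) \<le> real n * (sum \<nu> B - Surv u)"
proof (induction n)
  case 0 then show ?case by (simp add: Surv_0)
next
  case (Suc n)
  have "sum \<nu> B - Surv (real n * u + u) \<le> (sum \<nu> B - Surv (real n * u)) + (sum \<nu> B - Surv u)"
    using assms by (intro Surv_loss_subadd) auto
  then show ?case using Suc by (simp add: algebra_simps)
qed

(* Subadditivity splits [0, t] into n pieces, on each of which the second-order expansion of K
   applies; the quadratic error, of total size O(t^2 / n), vanishes as n grows. *)
lemma Surv_loss_le_flux: assumes "t \<ge> 0" shows "sum \<nu> B - Surv t \<le> t * flux"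
proof (rule ccontr)
  assume "\<not> ?thesis"
  then have d: "sum \<nu> B - Surv t - t * flux > 0" by simp
  let ?D = "card B * ((t * CB) ^ 2 * exp (t * CB))"
  have D: "?D \<ge> 0" by simp
  obtain n :: nat where n: "real n > ?D / (sum \<nu> B - Surv t - t * flux)"
    using reals_Archimedean2 by blast
  have npos: "real n > 0" using n D d by (smt (verit) divide_nonneg_pos)
  have CB: "CB \<ge> 0" by (rule abs_entry_sum_nonneg)
  have "sum \<nu> B - Surv t = sum \<nu> B - Surv (real n * (t / real n))" using npos by simp
  also have "\<dots> \<le> real n * (sum \<nu> B - Surv (t / real n))"
    using assms npos by (intro Surv_loss_mult) auto
  also have "\<dots> \<le> real n * ((t / real n) * flux + card B * ((t / real n * CB) ^ 2 * exp (t / real n * CB)))"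
    using assms npos by (intro mult_left_mono Surv_loss_short_time) auto
  also have "\<dots> = t * flux + card B * ((t * CB) ^ 2 * exp (t / real n * CB)) / real n"
    using npos by (simp add: field_simps power2_eq_square)
  also have "\<dots> \<le> t * flux + ?D / real n"
  proof -
    have n1: "real n \<ge> 1" using npos by (cases n) auto
    have "t / real n * CB \<le> t * CB"
      using npos n1 assms CB by (intro mult_right_mono) (auto simp: field_simps intro: mult_left_mono[of 1 "real n" t, simplified])
    then have "exp (t / real n * CB) \<le> exp (t * CB)" by simp
    then have "card B * ((t * CB) ^ 2 * exp (t / real n * CB)) \<le> ?D"
      by (intro mult_left_mono) auto
    then show ?thesis using npos by (simp add: divide_right_mono)
  qed
  finally have "sum \<nu> B - Surv t - t * flux \<le> ?D / real n" by simp
  moreover have "?D / real n < sum \<nu> B - Surv t - t * flux"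
    using n npos d by (simp add: field_simps)
  ultimately show False by simp
qed

lemma Surv_lower: "t \<ge> 0 \<Longrightarrow> Surv t \<ge> sum \<nu> B - t * flux"
  using Surv_loss_le_flux by force

lemma Surv_lipschitz: assumes "t \<ge> 0" "h \<ge> 0" shows "Surv t - Surv (t + h) \<le> h * flux"
  using Surv_loss_subadd[OF assms] Surv_loss_le_flux[OF assms(2)] by simp

definition Pfun :: "real \<Rightarrow> ('a \<Rightarrow> real) \<Rightarrow> 'a \<Rightarrow> real" where
  "Pfun t f x = (\<Sum>y\<in>\<Omega>. P t x y * f y)"

definition nu_avg :: "('a \<Rightarrow> real) \<Rightarrow> real" where
  "nu_avg f = (\<Sum>y\<in>\<Omega>. \<nu> y * f y)"

lemma P_zero: "x \<in> \<Omega> \<Longrightarrow> P 0 x y = (if x = y then 1 else 0)"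
  unfolding semigroup_def by (rule mexp_zero[OF fin])

lemma Pfun_zero: assumes "x \<in> \<Omega>" shows "Pfun 0 f x = f x"
proof -
  have "Pfun 0 f x = (\<Sum>y\<in>\<Omega>. if x = y then f x else 0)"
    unfolding Pfun_def using assms by (intro sum.cong refl) (simp add: P_zero)
  then show ?thesis using assms fin by simp
qed

lemma Pfun_add: assumes "x \<in> \<Omega>" shows "Pfun (s + t) f x = Pfun s (Pfun t f) x"
proof -
  have "Pfun (s + t) f x = (\<Sum>y\<in>\<Omega>. (\<Sum>z\<in>\<Omega>. P s x z * P t z y) * f y)"
    unfolding Pfun_def using assms by (intro sum.cong refl) (simp add: P_add)
  also have "\<dots> = (\<Sum>y\<in>\<Omega>. \<Sum>z\<in>\<Omega>. P s x z * (P t z y * f y))"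
    by (intro sum.cong refl) (simp add: sum_distrib_right mult.assoc)
  also have "\<dots> = (\<Sum>z\<in>\<Omega>. \<Sum>y\<in>\<Omega>. P s x z * (P t z y * f y))" by (rule sum.swap)
  also have "\<dots> = Pfun s (Pfun t f) x" unfolding Pfun_def by (simp add: sum_distrib_left)
  finally show ?thesis .
qed

lemma nu_avg_Pfun: "nu_avg (Pfun t f) = nu_avg f"
proof -
  have "nu_avg (Pfun t f) = (\<Sum>x\<in>\<Omega>. \<nu> x * (\<Sum>y\<in>\<Omega>. P t x y * f y))" by (simp add: nu_avg_def Pfun_def)
  also have "\<dots> = (\<Sum>y\<in>\<Omega>. (\<Sum>x\<in>\<Omega>. \<nu> x * P t x y) * f y)" by (rule sum_swap_mult)
  also have "\<dots> = nu_avg f" unfolding nu_avg_def by (intro sum.cong refl) (simp add: P_stat)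
  finally show ?thesis .
qed

lemma prob_avg_bounds:
  fixes p f :: "'a \<Rightarrow> real"
  assumes "\<And>y. y \<in> \<Omega> \<Longrightarrow> p y \<ge> 0" "sum p \<Omega> = 1" "\<And>y. y \<in> \<Omega> \<Longrightarrow> lo \<le> f y \<and> f y \<le> hi"
  shows "lo \<le> (\<Sum>y\<in>\<Omega>. p y * f y) \<and> (\<Sum>y\<in>\<Omega>. p y * f y) \<le> hi"
proof
  have "(\<Sum>y\<in>\<Omega>. p y * lo) \<le> (\<Sum>y\<in>\<Omega>. p y * f y)" by (rule sum_mono) (use assms in \<open>auto intro: mult_left_mono\<close>)
  then show "lo \<le> (\<Sum>y\<in>\<Omega>. p y * f y)" using assms(2) by (simp add: sum_distrib_right[symmetric])
  have "(\<Sum>y\<in>\<Omega>. p y * f y) \<le> (\<Sum>y\<in>\<Omega>. p y * hi)" by (rule sum_mono) (use assms in \<open>auto intro: mult_left_mono\<close>)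
  then show "(\<Sum>y\<in>\<Omega>. p y * f y) \<le> hi" using assms(2) by (simp add: sum_distrib_right[symmetric])
qed

definition osc_contracts :: "real \<Rightarrow> real \<Rightarrow> bool" where
  "osc_contracts T \<rho> = (\<forall>f lo D. D \<ge> 0 \<longrightarrow> (\<forall>y\<in>\<Omega>. lo \<le> f y \<and> f y \<le> lo + D) \<longrightarrow>
       (\<exists>lo'. \<forall>x\<in>\<Omega>. lo' \<le> Pfun T f x \<and> Pfun T f x \<le> lo' + \<rho> * D))"

lemma osc_contracts_iter:
  assumes c: "osc_contracts T \<rho>" and rho: "\<rho> \<ge> 0"
  shows "D \<ge> 0 \<Longrightarrow> (\<forall>y\<in>\<Omega>. lo \<le> f y \<and> f y \<le> lo + D) \<Longrightarrow>
       (\<exists>lo'. \<forall>x\<in>\<Omega>. lo' \<le> Pfun (real k * T) f x \<and> Pfun (real k * T) f x \<le> lo' + \<rho> ^ k * D)"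
proof (induction k arbitrary: f lo D)
  case 0
  then show ?case by (intro exI[of _ lo]) (simp add: Pfun_zero)
next
  case (Suc k)
  then obtain lo' where lo': "\<forall>x\<in>\<Omega>. lo' \<le> Pfun (real k * T) f x \<and> Pfun (real k * T) f x \<le> lo' + \<rho> ^ k * D"
    by blast
  have "\<rho> ^ k * D \<ge> 0" using Suc rho by simp
  then obtain lo'' where lo'': "\<forall>x\<in>\<Omega>. lo'' \<le> Pfun T (Pfun (real k * T) f) x \<and> Pfun T (Pfun (real k * T) f) x \<le> lo'' + \<rho> * (\<rho> ^ k * D)"
    using c lo' unfolding osc_contracts_def by blast
  have "Pfun (real (Suc k) * T) f x = Pfun T (Pfun (real k * T) f) x" if "x \<in> \<Omega>" for x
    using Pfun_add[OF that, of T "real k * T" f] by (simp add: algebra_simps)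
  then show ?case using lo'' by (intro exI[of _ lo'']) (auto simp: mult_ac)
qed

lemma osc_contracts_converge:
  assumes c: "osc_contracts T \<rho>" and rho: "\<rho> \<ge> 0" and D: "D \<ge> 0"
    and f: "\<forall>y\<in>\<Omega>. lo \<le> f y \<and> f y \<le> lo + D" and x: "x \<in> \<Omega>"
  shows "\<bar>Pfun (real k * T) f x - nu_avg f\<bar> \<le> \<rho> ^ k * D"
proof -
  obtain lo' where lo': "\<forall>x\<in>\<Omega>. lo' \<le> Pfun (real k * T) f x \<and> Pfun (real k * T) f x \<le> lo' + \<rho> ^ k * D"
    using osc_contracts_iter[OF c rho D f] by blast
  have "lo' \<le> nu_avg (Pfun (real k * T) f) \<and> nu_avg (Pfun (real k * T) f) \<le> lo' + \<rho> ^ k * D"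
    unfolding nu_avg_def using lo' by (intro prob_avg_bounds nu_nonneg nu_sum) auto
  then show ?thesis using lo' x by (simp add: nu_avg_Pfun abs_le_iff) (smt (verit))
qed

lemma tv_dist_as_avg: assumes "x \<in> \<Omega>"
  shows "tv_dist \<Omega> (P t x) \<nu> = Pfun t (\<lambda>y. if P t x y > \<nu> y then 1 else 0) x - nu_avg (\<lambda>y. if P t x y > \<nu> y then 1 else 0)"
proof -
  let ?d = "\<lambda>y. P t x y - \<nu> y"
  have z: "(\<Sum>y\<in>\<Omega>. ?d y) = 0" using P_row[OF assms] nu_sum by (simp add: sum_subtractf)
  have "(\<Sum>y\<in>\<Omega>. \<bar>?d y\<bar>) = (\<Sum>y\<in>\<Omega>. 2 * (?d y * (if P t x y > \<nu> y then 1 else 0)) - ?d y)"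
    by (intro sum.cong refl) auto
  also have "\<dots> = 2 * (\<Sum>y\<in>\<Omega>. ?d y * (if P t x y > \<nu> y then 1 else 0))"
    using z by (simp add: sum_subtractf sum_distrib_left)
  finally show ?thesis
    by (simp add: tv_dist_def Pfun_def nu_avg_def sum_subtractf[symmetric] left_diff_distrib)
qed

lemma mixing_osc_contracts:
  assumes "\<forall>\<eta>\<in>\<Omega>. tv_dist \<Omega> (P T \<eta>) \<nu> \<le> 1/4"
  shows "osc_contracts T (1/2)"
  unfolding osc_contracts_def
proof (intro allI impI)
  fix f lo D assume D: "(D::real) \<ge> 0" and f: "\<forall>y\<in>\<Omega>. lo \<le> f y \<and> f y \<le> lo + D"
  show "\<exists>lo'. \<forall>x\<in>\<Omega>. lo' \<le> Pfun T f x \<and> Pfun T f x \<le> lo' + 1/2 * D"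
  proof (intro exI[of _ "nu_avg f - D/4"] ballI)
    fix x assume x: "x \<in> \<Omega>"
    let ?d = "\<lambda>y. P T x y - \<nu> y"
    have z: "(\<Sum>y\<in>\<Omega>. ?d y) = 0" using P_row[OF x] nu_sum by (simp add: sum_subtractf)
    have "Pfun T f x - nu_avg f = (\<Sum>y\<in>\<Omega>. ?d y * f y)"
      by (simp add: Pfun_def nu_avg_def sum_subtractf[symmetric] left_diff_distrib)
    also have "\<dots> = (\<Sum>y\<in>\<Omega>. ?d y * (f y - (lo + D/2)))"
    proof -
      have a: "(\<Sum>y\<in>\<Omega>. ?d y * (f y - (lo + D/2))) = (\<Sum>y\<in>\<Omega>. ?d y * f y) - (\<Sum>y\<in>\<Omega>. ?d y * (lo + D/2))"
        by (simp only: right_diff_distrib sum_subtractf)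
      have b: "(\<Sum>y\<in>\<Omega>. ?d y * (lo + D/2)) = (\<Sum>y\<in>\<Omega>. ?d y) * (lo + D/2)"
        by (simp only: sum_distrib_right)
      show ?thesis using a b z by simp
    qed
    finally have e: "Pfun T f x - nu_avg f = (\<Sum>y\<in>\<Omega>. ?d y * (f y - (lo + D/2)))" .
    have "\<bar>\<Sum>y\<in>\<Omega>. ?d y * (f y - (lo + D/2))\<bar> \<le> (\<Sum>y\<in>\<Omega>. \<bar>?d y\<bar> * (D/2))"
    proof -
      have "\<bar>\<Sum>y\<in>\<Omega>. ?d y * (f y - (lo + D/2))\<bar> \<le> (\<Sum>y\<in>\<Omega>. \<bar>?d y * (f y - (lo + D/2))\<bar>)" by (rule sum_abs)
      also have "\<dots> \<le> (\<Sum>y\<in>\<Omega>. \<bar>?d y\<bar> * (D/2))"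
      proof (intro sum_mono)
        fix y assume "y \<in> \<Omega>"
        then have "lo \<le> f y" "f y \<le> lo + D" using f by auto
        then have "f y - (lo + D/2) \<le> D/2" "- (f y - (lo + D/2)) \<le> D/2" by linarith+
        then have "\<bar>f y - (lo + D/2)\<bar> \<le> D/2" by (rule abs_leI)
        then show "\<bar>?d y * (f y - (lo + D/2))\<bar> \<le> \<bar>?d y\<bar> * (D/2)" unfolding abs_mult by (rule mult_left_mono) auto
      qed
      finally show ?thesis .
    qed
    also have "\<dots> = D * tv_dist \<Omega> (P T x) \<nu>" unfolding tv_dist_def sum_distrib_right[symmetric] by (simp add: algebra_simps)
    also have "\<dots> \<le> D * (1/4)" using assms x D by (intro mult_left_mono) auto
    finally show "nu_avg f - D / 4 \<le> Pfun T f x \<and> Pfun T f x \<le> nu_avg f - D / 4 + 1 / 2 * D"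
      using e by (simp add: abs_le_iff) linarith
  qed
qed

lemma doeblin_osc_contracts:
  assumes y0: "y0 \<in> \<Omega>" and eps: "\<forall>x\<in>\<Omega>. P T x y0 \<ge> \<epsilon>" "\<epsilon> \<ge> 0" and T: "T \<ge> 0"
  shows "osc_contracts T (1 - \<epsilon>)"
  unfolding osc_contracts_def
proof (intro allI impI)
  fix f lo D assume D: "(D::real) \<ge> 0" and f: "\<forall>y\<in>\<Omega>. lo \<le> f y \<and> f y \<le> lo + D"
  show "\<exists>lo'. \<forall>x\<in>\<Omega>. lo' \<le> Pfun T f x \<and> Pfun T f x \<le> lo' + (1 - \<epsilon>) * D"
  proof (intro exI[of _ "\<epsilon> * f y0 + (1 - \<epsilon>) * lo"] ballI)
    fix x assume x: "x \<in> \<Omega>"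
    let ?w = "\<lambda>y. P T x y - (if y = y0 then \<epsilon> else 0)"
    have w0: "?w y \<ge> 0" if "y \<in> \<Omega>" for y using eps x that P_nonneg[OF that(1)] T
      by (auto intro: P_nonneg)
    have ws: "(\<Sum>y\<in>\<Omega>. ?w y) = 1 - \<epsilon>"
      using P_row[OF x] y0 fin by (simp add: sum_subtractf)
    have pf: "Pfun T f x = (\<Sum>y\<in>\<Omega>. ?w y * f y) + \<epsilon> * f y0"
    proof -
      have "(\<Sum>y\<in>\<Omega>. ?w y * f y) = Pfun T f x - (\<Sum>y\<in>\<Omega>. (if y = y0 then \<epsilon> else 0) * f y)"
        unfolding Pfun_def by (simp add: left_diff_distrib sum_subtractf)
      also have "(\<Sum>y\<in>\<Omega>. (if y = y0 then \<epsilon> else 0) * f y) = (\<Sum>y\<in>\<Omega>. if y = y0 then \<epsilon> * f y0 else 0)"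
        by (intro sum.cong) auto
      also have "\<dots> = \<epsilon> * f y0" using y0 fin by simp
      finally show ?thesis by simp
    qed
    have lo1: "(\<Sum>y\<in>\<Omega>. ?w y * lo) \<le> (\<Sum>y\<in>\<Omega>. ?w y * f y)"
      using f w0 by (intro sum_mono mult_left_mono) auto
    have hi1: "(\<Sum>y\<in>\<Omega>. ?w y * f y) \<le> (\<Sum>y\<in>\<Omega>. ?w y * (lo + D))"
      using f w0 by (intro sum_mono mult_left_mono) auto
    have e1: "(\<Sum>y\<in>\<Omega>. ?w y * lo) = (1 - \<epsilon>) * lo" using ws by (simp only: sum_distrib_right[symmetric])
    have e2: "(\<Sum>y\<in>\<Omega>. ?w y * (lo + D)) = (1 - \<epsilon>) * (lo + D)" using ws by (simp only: sum_distrib_right[symmetric])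
    show "\<epsilon> * f y0 + (1 - \<epsilon>) * lo \<le> Pfun T f x \<and> Pfun T f x \<le> \<epsilon> * f y0 + (1 - \<epsilon>) * lo + (1 - \<epsilon>) * D"
      using pf lo1 hi1 e1 e2 by (simp add: algebra_simps)
  qed
qed

lemma tv_dist_le_osc_contracts:
  assumes c: "osc_contracts T \<rho>" and rho: "\<rho> \<ge> 0" and x: "x \<in> \<Omega>"
  shows "tv_dist \<Omega> (P (real k * T) x) \<nu> \<le> \<rho> ^ k"
proof -
  let ?g = "\<lambda>y. if P (real k * T) x y > \<nu> y then 1 else (0::real)"
  have "tv_dist \<Omega> (P (real k * T) x) \<nu> = Pfun (real k * T) ?g x - nu_avg ?g" by (rule tv_dist_as_avg[OF x])
  also have "\<dots> \<le> \<bar>Pfun (real k * T) ?g x - nu_avg ?g\<bar>" by simp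
  also have "\<dots> \<le> \<rho> ^ k * 1" by (rule osc_contracts_converge[OF c rho, where D=1 and lo=0]) (use x in auto)
  finally show ?thesis by simp
qed

lemma exists_mixing_time:
  assumes irr: "irreducible_chain \<Omega> R" and ne: "\<Omega> \<noteq> {}"
  shows "\<exists>t>0. \<forall>\<eta>\<in>\<Omega>. tv_dist \<Omega> (P t \<eta>) \<nu> \<le> 1/4"
proof -
  obtain y0 where y0: "y0 \<in> \<Omega>" using ne by blast
  have ed: "pos_edges \<Omega> L = {(a, b). a \<in> \<Omega> \<and> b \<in> \<Omega> \<and> a \<noteq> b \<and> R a b > 0}"
    by (auto simp: pos_edges_def generator_def)
  have pos: "P 1 x y0 > 0" if "x \<in> \<Omega>" for x
    unfolding semigroup_def
    by (rule mexp_path_pos[OF fin L_metzler _ that y0]) (use irr that y0 ed in \<open>auto simp: irreducible_chain_def\<close>)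
  let ?\<epsilon> = "Min ((\<lambda>x. P 1 x y0) ` \<Omega>)"
  have epos: "?\<epsilon> > 0" using pos fin ne by (subst Min_gr_iff) auto
  have ele: "\<forall>x\<in>\<Omega>. P 1 x y0 \<ge> ?\<epsilon>" using fin by auto
  have e1: "?\<epsilon> \<le> 1" using ele y0 P_le1[OF y0, of 1 y0] by force
  have c: "osc_contracts 1 (1 - ?\<epsilon>)" by (rule doeblin_osc_contracts[OF y0 ele]) (use epos in auto)
  obtain k where k: "(1 - ?\<epsilon>) ^ k < 1/4" using real_arch_pow_inv[of "1/4" "1 - ?\<epsilon>"] epos by auto
  have k0: "k \<noteq> 0" using k by (intro notI) simp
  show ?thesis
  proof (intro exI[of _ "real k * 1"] conjI ballI)
    show "real k * 1 > 0" using k0 by simp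
    fix \<eta> assume "\<eta> \<in> \<Omega>"
    then have "tv_dist \<Omega> (P (real k * 1) \<eta>) \<nu> \<le> (1 - ?\<epsilon>) ^ k" by (intro tv_dist_le_osc_contracts[OF c]) (use e1 in auto)
    then show "tv_dist \<Omega> (P (real k * 1) \<eta>) \<nu> \<le> 1/4" using k by simp
  qed
qed

lemma sum_restrict_B:
  fixes g f :: "'a \<Rightarrow> real"
  shows "(\<Sum>y\<in>\<Omega>. g y * (if y \<in> B then f y else 0)) = (\<Sum>y\<in>B. g y * f y)"
proof -
  have "(\<Sum>y\<in>\<Omega>. g y * (if y \<in> B then f y else 0)) = (\<Sum>y\<in>\<Omega>. if y \<in> B then g y * f y else 0)"
    by (intro sum.cong) auto
  also have "\<dots> = (\<Sum>y\<in>\<Omega> \<inter> B. g y * f y)" by (rule sum.inter_restrict[OF fin, symmetric])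
  also have "\<Omega> \<inter> B = B" by auto
  finally show ?thesis .
qed

lemma killed_mass_add: "killed_mass (t + T) z = (\<Sum>y\<in>B. killed_mass t y * K T y z)"
proof -
  have "killed_mass (t + T) z = (\<Sum>x\<in>B. \<nu> x * (\<Sum>y\<in>B. K t x y * K T y z))"
    by (intro sum.cong refl) (simp add: K_add)
  also have "\<dots> = (\<Sum>y\<in>B. killed_mass t y * K T y z)" by (rule sum_swap_mult)
  finally show ?thesis .
qed

lemma Surv_split: "Surv (t + T + s) = (\<Sum>y\<in>B. killed_mass t y * (\<Sum>z\<in>B. K T y z * surv_from s z))"
proof -
  have "Surv (t + T + s) = (\<Sum>z\<in>B. killed_mass (t + T) z * surv_from s z)" by (rule Surv_add)
  also have "\<dots> = (\<Sum>z\<in>B. (\<Sum>y\<in>B. killed_mass t y * K T y z) * surv_from s z)" by (simp add: killed_mass_add)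
  also have "\<dots> = (\<Sum>y\<in>B. killed_mass t y * (\<Sum>z\<in>B. K T y z * surv_from s z))" by (rule sum_swap_mult[symmetric])
  finally show ?thesis .
qed

lemma mixing_surv_from_avg:
  assumes mixT: "\<forall>\<eta>\<in>\<Omega>. tv_dist \<Omega> (P T0 \<eta>) \<nu> \<le> 1/4" and y: "y \<in> \<Omega>" and s: "s \<ge> 0"
  shows "\<bar>(\<Sum>z\<in>B. P (real k * T0) y z * surv_from s z) - Surv s\<bar> \<le> (1/2) ^ k"
proof -
  let ?h = "\<lambda>z. if z \<in> B then surv_from s z else 0"
  have "\<forall>z\<in>\<Omega>. 0 \<le> ?h z \<and> ?h z \<le> 0 + 1" using s by (auto intro: surv_from_nonneg surv_from_le1)
  then have "\<bar>Pfun (real k * T0) ?h y - nu_avg ?h\<bar> \<le> (1/2) ^ k * 1"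
    by (intro osc_contracts_converge[OF mixing_osc_contracts[OF mixT] _ _ _ y]) auto
  moreover have "nu_avg ?h = Surv s" unfolding nu_avg_def Surv_eq by (rule sum_restrict_B)
  moreover have "Pfun (real k * T0) ?h y = (\<Sum>z\<in>B. P (real k * T0) y z * surv_from s z)"
    unfolding Pfun_def by (rule sum_restrict_B)
  ultimately show ?thesis by simp
qed

lemma Surv_mixing_upper:
  assumes mixT: "\<forall>\<eta>\<in>\<Omega>. tv_dist \<Omega> (P T0 \<eta>) \<nu> \<le> 1/4" and "T0 \<ge> 0" "t \<ge> 0" "s \<ge> 0"
  shows "Surv (t + real k * T0 + s) \<le> Surv t * (Surv s + (1/2) ^ k)"
proof -
  let ?T = "real k * T0"
  have "(\<Sum>z\<in>B. K ?T y z * surv_from s z) \<le> Surv s + (1/2) ^ k" if "y \<in> B" for y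
  proof -
    have "(\<Sum>z\<in>B. K ?T y z * surv_from s z) \<le> (\<Sum>z\<in>B. P ?T y z * surv_from s z)"
      using that assms by (intro sum_mono mult_right_mono K_le_P surv_from_nonneg) auto
    also have "\<dots> \<le> Surv s + (1/2) ^ k" using mixing_surv_from_avg[OF mixT, of y s k] that assms by auto
    finally show ?thesis .
  qed
  then have "Surv (t + ?T + s) \<le> (\<Sum>y\<in>B. killed_mass t y * (Surv s + (1/2) ^ k))"
    unfolding Surv_split using assms by (intro sum_mono mult_left_mono killed_mass_nonneg) auto
  also have "\<dots> = Surv t * (Surv s + (1/2) ^ k)" by (simp add: Surv_killed_mass sum_distrib_right)
  finally show ?thesis .
qed

lemma killed_mass_leak_le:
  assumes "t \<ge> 0" "T \<ge> 0"
  shows "(\<Sum>y\<in>B. killed_mass t y * (\<Sum>z\<in>B. P T y z - K T y z)) \<le> T * flux"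
proof -
  have "(\<Sum>y\<in>B. killed_mass t y * (\<Sum>z\<in>B. P T y z - K T y z)) \<le> (\<Sum>y\<in>B. \<nu> y * (\<Sum>z\<in>B. P T y z - K T y z))"
    using assms by (intro sum_mono mult_right_mono nu_K_le sum_nonneg) (auto simp: K_le_P)
  also have "\<dots> = (\<Sum>y\<in>B. \<nu> y * (\<Sum>z\<in>B. P T y z)) - Surv T"
    by (simp add: Surv_eq sum_subtractf right_diff_distrib)
  also have "(\<Sum>y\<in>B. \<nu> y * (\<Sum>z\<in>B. P T y z)) \<le> (\<Sum>y\<in>B. \<nu> y * 1)"
  proof (intro sum_mono mult_left_mono nu_nonneg)
    fix y assume y: "y \<in> B"
    have "(\<Sum>z\<in>B. P T y z) \<le> (\<Sum>z\<in>\<Omega>. P T y z)" using y assms fin by (intro sum_mono2 P_nonneg) auto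
    then show "(\<Sum>z\<in>B. P T y z) \<le> 1" using P_row y by auto
  qed auto
  finally show ?thesis using Surv_loss_le_flux[OF assms(2)] by simp
qed

lemma Surv_mixing_lower:
  assumes mixT: "\<forall>\<eta>\<in>\<Omega>. tv_dist \<Omega> (P T0 \<eta>) \<nu> \<le> 1/4" and "T0 \<ge> 0" "t \<ge> 0" "s \<ge> 0"
  shows "Surv t * (Surv s - (1/2) ^ k) - real k * T0 * flux \<le> Surv (t + real k * T0 + s)"
proof -
  let ?T = "real k * T0"
  let ?leak = "\<lambda>y. (\<Sum>z\<in>B. P ?T y z - K ?T y z)"
  have "Surv s - (1/2) ^ k - ?leak y \<le> (\<Sum>z\<in>B. K ?T y z * surv_from s z)" if "y \<in> B" for y
  proof -
    have "(\<Sum>z\<in>B. (P ?T y z - K ?T y z) * surv_from s z) \<le> ?leak y"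
      using that assms by (intro sum_mono mult_right_le_one_le surv_from_nonneg surv_from_le1) (auto simp: K_le_P)
    moreover have "Surv s - (1/2) ^ k \<le> (\<Sum>z\<in>B. P ?T y z * surv_from s z)"
      using mixing_surv_from_avg[OF mixT, of y s k] that assms by auto
    moreover have "(\<Sum>z\<in>B. (P ?T y z - K ?T y z) * surv_from s z)
        = (\<Sum>z\<in>B. P ?T y z * surv_from s z) - (\<Sum>z\<in>B. K ?T y z * surv_from s z)"
      by (simp add: sum_subtractf[symmetric] left_diff_distrib)
    ultimately show ?thesis by linarith
  qed
  then have "(\<Sum>y\<in>B. killed_mass t y * (Surv s - (1/2) ^ k - ?leak y)) \<le> Surv (t + ?T + s)"
    unfolding Surv_split using assms by (intro sum_mono mult_left_mono killed_mass_nonneg) auto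
  moreover have "(\<Sum>y\<in>B. killed_mass t y * (Surv s - (1/2) ^ k - ?leak y))
      = Surv t * (Surv s - (1/2) ^ k) - (\<Sum>y\<in>B. killed_mass t y * ?leak y)"
    by (simp add: Surv_killed_mass sum_distrib_right right_diff_distrib sum_subtractf)
  moreover have "(\<Sum>y\<in>B. killed_mass t y * ?leak y) \<le> ?T * flux"
    using assms by (intro killed_mass_leak_le) auto
  ultimately show ?thesis by simp
qed

abbreviation "jump_edges \<equiv> {(a, b). a \<in> \<Omega> \<and> b \<in> \<Omega> \<and> a \<noteq> b \<and> R a b > 0}"

lemma nu_pos: assumes irr: "irreducible_chain \<Omega> R" and x: "x \<in> \<Omega>" shows "\<nu> x > 0"
proof (rule ccontr)
  assume "\<not> \<nu> x > 0"
  then have x0: "\<nu> x = 0" using nu_nonneg[OF x] by simp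
  have all0: "\<nu> y = 0" if y: "y \<in> \<Omega>" for y
  proof -
    have "(y, x) \<in> jump_edges\<^sup>*" using irr y x by (auto simp: irreducible_chain_def)
    then show ?thesis
    proof (induction rule: converse_rtrancl_induct)
      case base then show ?case by (rule x0)
    next
      case (step y z)
      have yz: "y \<in> \<Omega>" "z \<in> \<Omega>" "y \<noteq> z" "R y z > 0" using step(1) by auto
      have "(\<Sum>w\<in>\<Omega>. \<nu> w * L w z) = \<nu> z * L z z + (\<Sum>w\<in>\<Omega> - {z}. \<nu> w * L w z)"
        by (rule sum.remove[OF fin yz(2)])
      also have "(\<Sum>w\<in>\<Omega> - {z}. \<nu> w * L w z) = (\<Sum>w\<in>\<Omega> - {z}. \<nu> w * R w z)"
        by (intro sum.cong refl) (auto simp: generator_def)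
      finally have "(\<Sum>w\<in>\<Omega> - {z}. \<nu> w * R w z) = 0" using nu_generator[OF yz(2)] step(3) by simp
      moreover have "\<forall>w\<in>\<Omega> - {z}. \<nu> w * R w z \<ge> 0"
        using rates yz by (auto intro!: mult_nonneg_nonneg nu_nonneg simp: valid_rates_def)
      ultimately have "\<forall>w\<in>\<Omega> - {z}. \<nu> w * R w z = 0" using sum_nonneg_eq_0_iff[of "\<Omega> - {z}" "\<lambda>w. \<nu> w * R w z"] fin by blast
      then have "\<nu> y * R y z = 0" using yz by auto
      then show ?case using yz by simp
    qed
  qed
  then have "sum \<nu> \<Omega> = 0" by simp
  then show False using nu_sum by simp
qed

lemma jump_path_crosses:
  assumes "(x, y) \<in> jump_edges\<^sup>*" "y \<in> A" "x \<in> B"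
  shows "\<exists>u\<in>B. \<exists>v\<in>A. (u, v) \<in> jump_edges"
  using assms
proof (induction rule: converse_rtrancl_induct)
  case base then show ?case by auto
next
  case (step x z)
  show ?case
  proof (cases "z \<in> A")
    case True then show ?thesis using step by blast
  next
    case False then show ?thesis using step by auto
  qed
qed

lemma flux_pos: assumes irr: "irreducible_chain \<Omega> R" and ne: "A \<noteq> {}" "B \<noteq> {}" shows "flux > 0"
proof -
  obtain b y where b: "b \<in> B" and y: "y \<in> A" using ne by blast
  have "(b, y) \<in> jump_edges\<^sup>*" using irr b y Asub by (auto simp: irreducible_chain_def)
  then obtain u v where u: "u \<in> B" and v: "v \<in> A" and uv: "(u, v) \<in> jump_edges" using jump_path_crosses y b by blast
  have Ruv: "R u v > 0" using uv by auto
  have nu: "\<nu> u > 0" using nu_pos[OF irr] u by auto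
  have "R u v \<le> (\<Sum>y\<in>A. R u y)"
    using v u fin Asub by (intro member_le_sum[where f="R u"] R_A_nonneg) (auto intro: finite_subset)
  then have "0 < \<nu> u * (\<Sum>y\<in>A. R u y)" using Ruv nu by (smt (verit) mult_pos_pos)
  also have "\<dots> \<le> flux"
    using u finite_B by (intro member_le_sum[where f="\<lambda>x. \<nu> x * (\<Sum>y\<in>A. R x y)"] mult_nonneg_nonneg nu_nonneg sum_nonneg R_A_nonneg) auto
  finally show ?thesis .
qed


lemma nu_compl: "sum \<nu> B = 1 - sum \<nu> A"
  using sum.subset_diff[OF Asub fin, of \<nu>] nu_sum by simp

lemma flux_le_escape_rate: "flux \<le> escape_rate \<Omega> R \<nu> A"
proof (cases "sum \<nu> B = 0")
  case True
  then have "\<forall>x\<in>B. \<nu> x = 0" using finite_B by (subst (asm) sum_nonneg_eq_0_iff) (auto simp: nu_nonneg)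
  then show ?thesis by (simp add: escape_rate_def)
next
  case False
  have "sum \<nu> B \<le> 1" using nu_compl sum_nonneg[of A \<nu>] Asub nu_nonneg by force
  moreover have "sum \<nu> B \<ge> 0" by (intro sum_nonneg nu_nonneg) auto
  ultimately have "flux \<le> flux / sum \<nu> B" using False flux_nonneg by (simp add: le_divide_eq mult_left_le)
  then show ?thesis by (simp add: escape_rate_def)
qed

lemma obtain_mixing_time_near:
  assumes irr: "irreducible_chain \<Omega> R" and ne: "\<Omega> \<noteq> {}" and e: "e \<ge> 0" and \<delta>: "\<delta> > 0"
  obtains T where "T > 0" "\<forall>\<eta>\<in>\<Omega>. tv_dist \<Omega> (P T \<eta>) \<nu> \<le> 1/4"
    "T * e \<le> mixing_time \<Omega> R \<nu> * e + \<delta>"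
proof -
  define M where "M = {t. t > 0 \<and> (\<forall>\<eta>\<in>\<Omega>. tv_dist \<Omega> (P t \<eta>) \<nu> \<le> 1/4)}"
  have mix: "mixing_time \<Omega> R \<nu> = Inf M" by (simp add: M_def mixing_time_def semigroup_def)
  have "M \<noteq> {}" using exists_mixing_time[OF irr ne] by (auto simp: M_def)
  moreover have "Inf M < Inf M + \<delta> / (e + 1)" using e \<delta> by simp
  ultimately obtain T where T: "T \<in> M" "T < Inf M + \<delta> / (e + 1)" using cInf_lessD by blast
  have "T * e \<le> (Inf M + \<delta> / (e + 1)) * e" using T(2) e by (intro mult_right_mono) auto
  also have "\<dots> \<le> Inf M * e + \<delta>" using e \<delta> by (simp add: field_simps)
  finally show ?thesis using that T(1) mix by (auto simp: M_def)
qed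

end

section \<open>Integrals of step functions\<close>

definition step_cell :: "real \<Rightarrow> nat \<Rightarrow> real set" where
  "step_cell c j = {real j * c ..< (real j + 1) * c}"

lemma in_step_cell_iff:
  assumes c: "c > 0" and t: "t \<ge> 0"
  shows "t \<in> step_cell c j \<longleftrightarrow> j = nat \<lfloor>t / c\<rfloor>"
proof -
  have "t \<in> step_cell c j \<longleftrightarrow> real j \<le> t / c \<and> t / c < real j + 1"
    using c by (simp add: step_cell_def field_simps)
  also have "\<dots> \<longleftrightarrow> \<lfloor>t / c\<rfloor> = int j"
    by (simp add: floor_eq_iff)
  also have "\<dots> \<longleftrightarrow> j = nat \<lfloor>t / c\<rfloor>"
    using c t by auto
  finally show ?thesis .
qed

lemma indicator_step_cell:
  assumes c: "c > 0" and t: "t \<ge> 0"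
  shows "indicator (step_cell c j) t = (if j = nat \<lfloor>t / c\<rfloor> then 1 else (0::ennreal))"
  using in_step_cell_iff[OF c t, of j] by (auto simp: indicator_def)

lemma indicator_step_cell_neg:
  assumes c: "c > 0" and t: "t < 0"
  shows "indicator (step_cell c j) t = (0::ennreal)"
proof -
  have "t \<notin> step_cell c j" using c t by (auto simp: step_cell_def) (smt (verit) mult_nonneg_nonneg of_nat_0_le_iff)
  then show ?thesis by simp
qed

lemma nn_integral_le_step_sum:
  fixes f :: "real \<Rightarrow> real" and g :: "nat \<Rightarrow> real" and c :: real
  assumes c: "c > 0" and g: "\<And>j. g j \<ge> 0"
    and fg: "\<And>t. t \<ge> 0 \<Longrightarrow> f t \<le> g (nat \<lfloor>t / c\<rfloor>)"
  shows "(\<integral>\<^sup>+ t. ennreal (f t) * indicator {0..} t \<partial>lborel) \<le> (\<Sum>j. ennreal (g j * c))"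
proof -
  have pw: "ennreal (f t) * indicator {0..} t \<le> (\<Sum>j. ennreal (g j) * indicator (step_cell c j) t)" for t
  proof (cases "t \<ge> 0")
    case True
    let ?j = "nat \<lfloor>t / c\<rfloor>"
    have "ennreal (f t) * indicator {0..} t = ennreal (f t)" using True by simp
    also have "\<dots> \<le> ennreal (g ?j)" using fg[OF True] g by simp
    also have "\<dots> = (\<Sum>j\<in>{?j}. ennreal (g j) * indicator (step_cell c j) t)"
      using indicator_step_cell[OF c True, of ?j] by simp
    also have "\<dots> \<le> (\<Sum>j. ennreal (g j) * indicator (step_cell c j) t)"
      by (rule sum_le_suminf[OF summableI]) auto
    finally show ?thesis .
  next
    case False
    then show ?thesis by simp
  qed
  have "(\<integral>\<^sup>+ t. ennreal (f t) * indicator {0..} t \<partial>lborel) \<le> (\<integral>\<^sup>+ t. (\<Sum>j. ennreal (g j) * indicator (step_cell c j) t) \<partial>lborel)"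
    by (intro nn_integral_mono pw)
  also have "\<dots> = (\<Sum>j. \<integral>\<^sup>+ t. ennreal (g j) * indicator (step_cell c j) t \<partial>lborel)"
    by (rule nn_integral_suminf) (auto simp: step_cell_def)
  also have "\<dots> = (\<Sum>j. ennreal (g j * c))"
  proof (intro arg_cong[where f=suminf] ext)
    fix j
    have le: "real j * c \<le> (real j + 1) * c" using c by (simp add: field_simps)
    have "(\<integral>\<^sup>+ t. ennreal (g j) * indicator (step_cell c j) t \<partial>lborel) = ennreal (g j) * emeasure lborel (step_cell c j)"
      by (rule nn_integral_cmult_indicator) (simp add: step_cell_def)
    also have "\<dots> = ennreal (g j) * ennreal c" using le by (simp add: step_cell_def algebra_simps)
    also have "\<dots> = ennreal (g j * c)" using g c by (simp add: ennreal_mult)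
    finally show "(\<integral>\<^sup>+ t. ennreal (g j) * indicator (step_cell c j) t \<partial>lborel) = ennreal (g j * c)" .
  qed
  finally show ?thesis .
qed

lemma step_sum_le_nn_integral:
  fixes f :: "real \<Rightarrow> real" and g :: "nat \<Rightarrow> real" and c :: real
  assumes c: "c > 0" and g: "\<And>j. g j \<ge> 0"
    and fg: "\<And>t. t \<ge> 0 \<Longrightarrow> nat \<lfloor>t / c\<rfloor> < J \<Longrightarrow> g (nat \<lfloor>t / c\<rfloor>) \<le> f t"
  shows "ennreal (\<Sum>j<J. g j * c) \<le> (\<integral>\<^sup>+ t. ennreal (f t) * indicator {0..} t \<partial>lborel)"
proof -
  have pw: "(\<Sum>j<J. ennreal (g j) * indicator (step_cell c j) t) \<le> ennreal (f t) * indicator {0..} t" for t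
  proof (cases "t \<ge> 0")
    case True
    let ?j = "nat \<lfloor>t / c\<rfloor>"
    have "(\<Sum>j<J. ennreal (g j) * indicator (step_cell c j) t) = (\<Sum>j<J. if j = ?j then ennreal (g ?j) else 0)"
      by (intro sum.cong refl) (simp add: indicator_step_cell[OF c True])
    also have "\<dots> = (if ?j < J then ennreal (g ?j) else 0)" by simp
    also have "\<dots> \<le> ennreal (f t)" using fg[OF True] by (auto intro: ennreal_leI)
    also have "\<dots> = ennreal (f t) * indicator {0..} t" using True by simp
    finally show ?thesis .
  next
    case False
    then show ?thesis by (simp add: indicator_step_cell_neg[OF c])
  qed
  have "ennreal (\<Sum>j<J. g j * c) = (\<Sum>j<J. ennreal (g j * c))"
    using g c by (simp add: sum_ennreal)
  also have "\<dots> = (\<Sum>j<J. \<integral>\<^sup>+ t. ennreal (g j) * indicator (step_cell c j) t \<partial>lborel)"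
  proof (intro sum.cong refl)
    fix j
    have le: "real j * c \<le> (real j + 1) * c" using c by (simp add: field_simps)
    have "(\<integral>\<^sup>+ t. ennreal (g j) * indicator (step_cell c j) t \<partial>lborel) = ennreal (g j) * emeasure lborel (step_cell c j)"
      by (rule nn_integral_cmult_indicator) (simp add: step_cell_def)
    also have "\<dots> = ennreal (g j) * ennreal c" using le by (simp add: step_cell_def algebra_simps)
    also have "\<dots> = ennreal (g j * c)" using g c by (simp add: ennreal_mult)
    finally show "ennreal (g j * c) = (\<integral>\<^sup>+ t. ennreal (g j) * indicator (step_cell c j) t \<partial>lborel)" by simp
  qed
  also have "\<dots> = (\<integral>\<^sup>+ t. (\<Sum>j<J. ennreal (g j) * indicator (step_cell c j) t) \<partial>lborel)"
    by (rule nn_integral_sum[symmetric]) (auto simp: step_cell_def)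
  also have "\<dots> \<le> (\<integral>\<^sup>+ t. ennreal (f t) * indicator {0..} t \<partial>lborel)"
    by (intro nn_integral_mono pw)
  finally show ?thesis .
qed

section \<open>Survival functions with mixing\<close>

lemma root_le_of_pow:
  assumes "0 < m" "0 \<le> x" "y \<le> x ^ m"
  shows "root m y \<le> x"
  using real_root_le_mono[OF assms(1,3)] real_root_power_cancel[OF assms(1,2)] by simp

lemma le_root_of_pow:
  assumes "0 < m" "0 \<le> x" "x ^ m \<le> y"
  shows "x \<le> root m y"
  using real_root_le_mono[OF assms(1,3)] real_root_power_cancel[OF assms(1,2)] by simp

(* The properties of S(t) = P_nu[H_A > t] used in the argument, with a = nu(A), rho the flux
   into A and T0 a time at which the chain is 1/4-mixed. *)
locale survival_profile =
  fixes S :: "real \<Rightarrow> real" and a \<rho> T0 :: real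
  assumes mono: "\<And>s t. 0 \<le> s \<Longrightarrow> s \<le> t \<Longrightarrow> S t \<le> S s"
    and nonneg: "\<And>t. 0 \<le> t \<Longrightarrow> 0 \<le> S t"
    and S0: "S 0 = 1 - a"
    and lower: "\<And>t. 0 \<le> t \<Longrightarrow> 1 - a - t * \<rho> \<le> S t"
    and lipschitz: "\<And>t h. 0 \<le> t \<Longrightarrow> 0 \<le> h \<Longrightarrow> S t - S (t + h) \<le> h * \<rho>"
    and mixing_upper: "\<And>t s k. 0 \<le> t \<Longrightarrow> 0 \<le> s \<Longrightarrow> S (t + real k * T0 + s) \<le> S t * (S s + (1/2) ^ k)"
    and mixing_lower: "\<And>t s k. 0 \<le> t \<Longrightarrow> 0 \<le> s \<Longrightarrow> S t * (S s - (1/2) ^ k) - real k * T0 * \<rho> \<le> S (t + real k * T0 + s)"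
    and T0_pos: "T0 > 0" and rho_pos: "\<rho> > 0" and apos: "0 < a" and asmall: "a < 1 - exp (-1)"
begin

definition "Theta = Inf {t. t > 0 \<and> S t < exp (-1)}"
definition "EH = enn2real (\<integral>\<^sup>+ t. ennreal (S t) * indicator {0..} t \<partial>lborel)"

lemma a_less_1: "a < 1" using asmall by (smt (verit) exp_gt_zero)

lemma S_eventually_small: "\<exists>t>0. S t < exp (-1)"
proof -
  obtain k where k: "(1/2::real) ^ k < a / 2" using real_arch_pow_inv[of "a/2" "1/2"] apos by auto
  have k0: "k \<noteq> 0" using k a_less_1 by (intro notI) simp
  let ?\<tau> = "real k * T0"
  have gap_pos: "?\<tau> > 0" using k0 T0_pos by simp
  have rec: "S (real j * ?\<tau>) \<le> (1 - a/2) ^ j" for j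
  proof (induction j)
    case 0 then show ?case using S0 apos by simp
  next
    case (Suc j)
    have "S (real (Suc j) * ?\<tau>) = S (real j * ?\<tau> + ?\<tau> + 0)" by (simp add: algebra_simps)
    also have "\<dots> \<le> S (real j * ?\<tau>) * (S 0 + (1/2) ^ k)"
      using gap_pos by (intro mixing_upper) auto
    also have "\<dots> \<le> (1 - a/2) ^ j * (1 - a / 2)"
      using Suc k S0 nonneg[of "real j * ?\<tau>"] gap_pos a_less_1 by (intro mult_mono) (auto simp: add_nonneg_nonneg)
    finally show ?case by (simp add: mult.commute)
  qed
  obtain j where j: "(1 - a/2) ^ j < exp (-1)" using real_arch_pow_inv[of "exp (-1)" "1 - a/2"] apos by auto
  have j0: "j \<noteq> 0" using j by (intro notI) (simp add: exp_less_one_iff[of "-1", simplified])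
  show ?thesis using rec[of j] j j0 gap_pos by (intro exI[of _ "real j * ?\<tau>"]) auto
qed

lemma theta_set_ne: "{t. t > 0 \<and> S t < exp (-1)} \<noteq> {}" using S_eventually_small by auto
lemma theta_set_bdd: "bdd_below {t. t > 0 \<and> S t < exp (-1)}" by (rule bdd_belowI[of _ 0]) auto

lemma Theta_lower: "Theta \<ge> (1 - a - exp (-1)) / \<rho>"
  unfolding Theta_def
proof (rule cInf_greatest[OF theta_set_ne])
  fix t assume "t \<in> {t. t > 0 \<and> S t < exp (-1)}"
  then have "t > 0" "S t < exp (-1)" by auto
  then have "1 - a - t * \<rho> < exp (-1)" using lower[of t] by simp
  then show "(1 - a - exp (-1)) / \<rho> \<le> t" using rho_pos by (simp add: field_simps)
qed

lemma Theta_pos: "Theta > 0"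
proof -
  have "(1 - a - exp (-1)) / \<rho> > 0" using asmall rho_pos by simp
  then show ?thesis using Theta_lower by simp
qed

lemma S_Theta: "S Theta = exp (-1)"
proof (rule antisym)
  show "S Theta \<le> exp (-1)"
  proof (rule field_le_epsilon)
    fix e :: real assume e: "e > 0"
    have "Theta < Theta + e / \<rho>" using e rho_pos by simp
    then obtain t' where t': "t' \<in> {t. t > 0 \<and> S t < exp (-1)}" "t' < Theta + e / \<rho>"
      using cInf_lessD[OF theta_set_ne] unfolding Theta_def by blast
    have "Theta \<le> t'" unfolding Theta_def by (rule cInf_lower[OF t'(1) theta_set_bdd])
    have "S (Theta + e / \<rho>) \<le> S t'" using t' by (intro mono) auto
    moreover have "S Theta - S (Theta + e / \<rho>) \<le> e / \<rho> * \<rho>"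
      using Theta_pos e rho_pos by (intro lipschitz) auto
    ultimately show "S Theta \<le> exp (-1) + e" using t' rho_pos by simp
  qed
  show "exp (-1) \<le> S Theta"
  proof (rule field_le_epsilon)
    fix e :: real assume e: "e > 0"
    define t where "t = Theta - min (Theta / 2) (e / \<rho>)"
    have t0: "t > 0" "t < Theta" using Theta_pos e rho_pos by (auto simp: t_def)
    have "t \<notin> {t. t > 0 \<and> S t < exp (-1)}"
    proof
      assume "t \<in> {t. t > 0 \<and> S t < exp (-1)}"
      then have "Theta \<le> t" unfolding Theta_def by (rule cInf_lower[OF _ theta_set_bdd])
      then show False using t0 by simp
    qed
    then have St: "S t \<ge> exp (-1)" using t0 by auto
    have "S t - S (t + (Theta - t)) \<le> (Theta - t) * \<rho>" using t0 by (intro lipschitz) auto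
    moreover have "(Theta - t) * \<rho> \<le> e" using e rho_pos by (simp add: t_def min_def field_simps)
    ultimately show "exp (-1) \<le> S Theta + e" using St by simp
  qed
qed

context
  fixes m k :: nat
  assumes m1: "m \<ge> 1"
begin

definition "block_len = Theta / real m + real k * T0"
definition "block_surv = S (Theta / real m)"
definition "mix_err = ((1::real)/2) ^ k"
definition "mix_delay = real k * T0"

lemma mix_delay_nonneg: "mix_delay \<ge> 0" using T0_pos by (simp add: mix_delay_def)
lemma mix_err_pos: "mix_err > 0" by (simp add: mix_err_def)
lemma theta_frac_pos: "Theta / real m > 0" using Theta_pos m1 by simp
lemma block_len_pos: "block_len > 0"
proof -
  have "real k * T0 \<ge> 0" using T0_pos by simp
  then show ?thesis using theta_frac_pos by (simp add: block_len_def add_pos_nonneg)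
qed
lemma block_surv_nonneg: "block_surv \<ge> 0" using theta_frac_pos by (simp add: block_surv_def nonneg)
lemma block_surv_le: "block_surv \<le> 1 - a" using theta_frac_pos mono[of 0 "Theta / real m"] S0 by (simp add: block_surv_def)

lemma block_len_Suc: "real (Suc j) * block_len = real j * block_len + real k * T0 + Theta / real m"
  by (simp add: block_len_def algebra_simps add_divide_distrib)

lemma S_blocks_upper: "S (real j * block_len) \<le> (block_surv + mix_err) ^ j"
proof (induction j)
  case 0 then show ?case using S0 apos by simp
next
  case (Suc j)
  have "S (real (Suc j) * block_len) \<le> S (real j * block_len) * (block_surv + mix_err)"
    unfolding block_len_Suc block_surv_def mix_err_def using block_len_pos theta_frac_pos by (intro mixing_upper) auto
  also have "\<dots> \<le> (block_surv + mix_err) ^ j * (block_surv + mix_err)"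
    using Suc block_surv_nonneg mix_err_pos by (intro mult_right_mono) auto
  finally show ?case by (simp add: mult.commute)
qed

lemma S_blocks_lower: assumes x: "0 \<le> block_surv - mix_err"
  shows "(1 - a) * (block_surv - mix_err) ^ j - real j * mix_delay * \<rho> \<le> S (real j * block_len)"
proof (induction j)
  case 0 then show ?case using S0 by simp
next
  case (Suc j)
  have x1: "block_surv - mix_err \<le> 1" using block_surv_le mix_err_pos apos by simp
  have jt: "real j * mix_delay * \<rho> \<ge> 0" using mix_delay_nonneg rho_pos by simp
  have "(1 - a) * (block_surv - mix_err) ^ Suc j - real (Suc j) * mix_delay * \<rho>
      \<le> ((1 - a) * (block_surv - mix_err) ^ j - real j * mix_delay * \<rho>) * (block_surv - mix_err) - mix_delay * \<rho>"
  proof -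
    have "real j * mix_delay * \<rho> * (block_surv - mix_err) \<le> real j * mix_delay * \<rho>"
      using jt x x1 by (simp add: mult_left_le)
    then show ?thesis by (simp add: algebra_simps)
  qed
  also have "\<dots> \<le> S (real j * block_len) * (block_surv - mix_err) - mix_delay * \<rho>"
    using Suc x by (intro diff_right_mono mult_right_mono) auto
  also have "\<dots> \<le> S (real (Suc j) * block_len)"
    unfolding block_len_Suc block_surv_def mix_err_def mix_delay_def using mixing_lower[of "real j * block_len" "Theta / real m" k] block_len_pos theta_frac_pos
    by (simp add: block_surv_def mix_err_def mix_delay_def mult.assoc)
  finally show ?case .
qed

lemma blocks_len_m: "real m * block_len = Theta + real m * mix_delay"
  using m1 by (simp add: block_len_def mix_delay_def algebra_simps)

lemma exp_m1_le_block_surv_pow: "exp (-1) - real m * mix_delay * \<rho> \<le> (block_surv + mix_err) ^ m"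
proof -
  have "S Theta - S (Theta + real m * mix_delay) \<le> real m * mix_delay * \<rho>"
    using Theta_pos mix_delay_nonneg by (intro lipschitz) auto
  then have "exp (-1) - real m * mix_delay * \<rho> \<le> S (real m * block_len)" using S_Theta blocks_len_m by simp
  also have "\<dots> \<le> (block_surv + mix_err) ^ m" by (rule S_blocks_upper)
  finally show ?thesis .
qed

lemma block_surv_pow_le_exp_m1: assumes "0 \<le> block_surv - mix_err" shows "(1 - a) * (block_surv - mix_err) ^ m - real m * mix_delay * \<rho> \<le> exp (-1)"
proof -
  have "(1 - a) * (block_surv - mix_err) ^ m - real m * mix_delay * \<rho> \<le> S (real m * block_len)" by (rule S_blocks_lower[OF assms])
  also have "\<dots> \<le> S Theta" unfolding blocks_len_m using Theta_pos mix_delay_nonneg by (intro mono) auto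
  finally show ?thesis using S_Theta by simp
qed

lemma surv_integral_upper: assumes "block_surv + mix_err < 1"
  shows "(\<integral>\<^sup>+ t. ennreal (S t) * indicator {0..} t \<partial>lborel) \<le> ennreal (block_len / (1 - (block_surv + mix_err)))"
proof -
  have "(\<integral>\<^sup>+ t. ennreal (S t) * indicator {0..} t \<partial>lborel) \<le> (\<Sum>j. ennreal ((block_surv + mix_err) ^ j * block_len))"
  proof (rule nn_integral_le_step_sum[OF block_len_pos])
    show "\<And>j. 0 \<le> (block_surv + mix_err) ^ j" using block_surv_nonneg mix_err_pos by simp
    fix t :: real assume t: "t \<ge> 0"
    have "real (nat \<lfloor>t / block_len\<rfloor>) * block_len \<le> t"
    proof -
      have "real (nat \<lfloor>t / block_len\<rfloor>) = of_int \<lfloor>t / block_len\<rfloor>" using t block_len_pos by simp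
      also have "\<dots> \<le> t / block_len" by (rule of_int_floor_le)
      finally show ?thesis using block_len_pos by (simp add: field_simps)
    qed
    then have "S t \<le> S (real (nat \<lfloor>t / block_len\<rfloor>) * block_len)" using block_len_pos by (intro mono) auto
    also have "\<dots> \<le> (block_surv + mix_err) ^ nat \<lfloor>t / block_len\<rfloor>" by (rule S_blocks_upper)
    finally show "S t \<le> (block_surv + mix_err) ^ nat \<lfloor>t / block_len\<rfloor>" .
  qed
  also have "(\<Sum>j. ennreal ((block_surv + mix_err) ^ j * block_len)) = ennreal (block_len / (1 - (block_surv + mix_err)))"
  proof (rule suminf_ennreal_eq)
    show "\<And>i. 0 \<le> (block_surv + mix_err) ^ i * block_len" using block_surv_nonneg mix_err_pos block_len_pos by simp
    have "(\<lambda>j. (block_surv + mix_err) ^ j) sums (1 / (1 - (block_surv + mix_err)))"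
      by (rule geometric_sums) (use assms block_surv_nonneg mix_err_pos in auto)
    from sums_mult2[OF this, of block_len] show "(\<lambda>j. (block_surv + mix_err) ^ j * block_len) sums (block_len / (1 - (block_surv + mix_err)))" by simp
  qed
  finally show ?thesis .
qed

lemma EH_upper: assumes "block_surv + mix_err < 1" shows "EH \<le> block_len / (1 - (block_surv + mix_err))"
  unfolding EH_def by (rule enn2real_leI[OF _ surv_integral_upper[OF assms]]) (use assms block_len_pos in simp)

lemma EH_lower: assumes x: "0 \<le> block_surv - mix_err" and "block_surv + mix_err < 1"
  shows "(\<Sum>j<J. block_len * ((1 - a) * (block_surv - mix_err) ^ Suc j - real (Suc j) * mix_delay * \<rho>)) \<le> EH"
proof -
  let ?X = "\<integral>\<^sup>+ t. ennreal (S t) * indicator {0..} t \<partial>lborel"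
  have fin: "?X < top" using le_less_trans[OF surv_integral_upper[OF assms(2)] ennreal_less_top] .
  have "ennreal (\<Sum>j<J. S (real (Suc j) * block_len) * block_len) \<le> ?X"
  proof (rule step_sum_le_nn_integral[OF block_len_pos])
    show "\<And>j. 0 \<le> S (real (Suc j) * block_len)" using block_len_pos by (intro nonneg) simp
    fix t :: real assume t: "t \<ge> 0"
    have "t \<le> real (Suc (nat \<lfloor>t / block_len\<rfloor>)) * block_len"
    proof -
      have "t / block_len \<le> of_int \<lfloor>t / block_len\<rfloor> + 1" by linarith
      also have "of_int \<lfloor>t / block_len\<rfloor> + 1 = real (Suc (nat \<lfloor>t / block_len\<rfloor>))" using t block_len_pos by simp
      finally show ?thesis using block_len_pos by (simp add: field_simps)
    qed
    then show "S (real (Suc (nat \<lfloor>t / block_len\<rfloor>)) * block_len) \<le> S t" using t by (intro mono) auto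
  qed
  then have "enn2real (ennreal (\<Sum>j<J. S (real (Suc j) * block_len) * block_len)) \<le> enn2real ?X"
    by (rule enn2real_mono[OF _ fin])
  moreover have "(\<Sum>j<J. S (real (Suc j) * block_len) * block_len) \<ge> 0"
    using block_len_pos by (intro sum_nonneg mult_nonneg_nonneg nonneg) auto
  ultimately have "(\<Sum>j<J. S (real (Suc j) * block_len) * block_len) \<le> EH"
    unfolding EH_def by simp
  moreover have "(\<Sum>j<J. block_len * ((1 - a) * (block_surv - mix_err) ^ Suc j - real (Suc j) * mix_delay * \<rho>)) \<le> (\<Sum>j<J. S (real (Suc j) * block_len) * block_len)"
  proof (intro sum_mono)
    fix j assume "j \<in> {..<J}"
    have "(1 - a) * (block_surv - mix_err) ^ Suc j - real (Suc j) * mix_delay * \<rho> \<le> S (real (Suc j) * block_len)"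
      by (rule S_blocks_lower[OF x])
    then show "block_len * ((1 - a) * (block_surv - mix_err) ^ Suc j - real (Suc j) * mix_delay * \<rho>) \<le> S (real (Suc j) * block_len) * block_len"
      using block_len_pos by (simp add: mult.commute[of block_len])
  qed
  ultimately show ?thesis by simp
qed


lemma block_surv_near:
  fixes q :: real
  assumes lo: "q - mix_err < root m (exp (-1) - real m * mix_delay * \<rho>)"
    and hi: "root m ((exp (-1) + real m * mix_delay * \<rho>) / (1 - a)) < q + mix_err"
    and q: "0 < q - 3 * mix_err"
  shows "q - 3 * mix_err < block_surv - mix_err" and "block_surv + mix_err < q + 3 * mix_err"
proof -
  have m0: "0 < m" using m1 by simp
  have "root m (exp (-1) - real m * mix_delay * \<rho>) \<le> block_surv + mix_err"
    using exp_m1_le_block_surv_pow block_surv_nonneg mix_err_pos by (intro root_le_of_pow[OF m0]) auto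
  with lo show lower: "q - 3 * mix_err < block_surv - mix_err" by simp
  then have nonneg: "0 \<le> block_surv - mix_err" using q by simp
  have "(block_surv - mix_err) ^ m \<le> (exp (-1) + real m * mix_delay * \<rho>) / (1 - a)"
    using block_surv_pow_le_exp_m1[OF nonneg] a_less_1 by (simp add: field_simps)
  then have "block_surv - mix_err \<le> root m ((exp (-1) + real m * mix_delay * \<rho>) / (1 - a))"
    by (rule le_root_of_pow[OF m0 nonneg])
  with hi show "block_surv + mix_err < q + 3 * mix_err" by simp
qed

lemma EH_ratio_upper:
  fixes q :: real
  assumes hi: "block_surv + mix_err < q + 3 * mix_err" and q: "q + 3 * mix_err < 1"
  shows "EH / Theta \<le> (1 / real m + mix_delay * \<rho> / (1 - a - exp (-1))) / (1 - q - 3 * mix_err)"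
proof -
  have lt1: "block_surv + mix_err < 1" using hi q by simp
  have ratio: "block_len / Theta = 1 / real m + mix_delay / Theta"
    using Theta_pos by (simp add: block_len_def mix_delay_def field_simps)
  have delay: "mix_delay / Theta \<le> mix_delay * \<rho> / (1 - a - exp (-1))"
  proof -
    have "mix_delay / Theta \<le> mix_delay / ((1 - a - exp (-1)) / \<rho>)"
      using Theta_lower asmall rho_pos mix_delay_nonneg Theta_pos by (intro divide_left_mono) auto
    then show ?thesis using rho_pos by (simp add: field_simps)
  qed
  have "EH \<le> block_len / (1 - (block_surv + mix_err))" by (rule EH_upper[OF lt1])
  also have "\<dots> \<le> block_len / (1 - q - 3 * mix_err)"
    using hi q lt1 block_len_pos by (intro divide_left_mono mult_pos_pos) auto
  finally have "EH / Theta \<le> block_len / (1 - q - 3 * mix_err) / Theta"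
    using Theta_pos by (intro divide_right_mono) auto
  also have "\<dots> = (block_len / Theta) / (1 - q - 3 * mix_err)" by simp
  also have "\<dots> \<le> (1 / real m + mix_delay * \<rho> / (1 - a - exp (-1))) / (1 - q - 3 * mix_err)"
    unfolding ratio using delay q by (intro divide_right_mono) auto
  finally show ?thesis .
qed

lemma EH_ratio_lower:
  fixes q :: real
  assumes lo: "q - 3 * mix_err < block_surv - mix_err" and q: "0 < q - 3 * mix_err"
    and lt1: "block_surv + mix_err < 1"
  shows "1 / real m * (\<Sum>j<J. (1 - a) * (q - 3 * mix_err) ^ Suc j - real (Suc j) * (mix_delay * \<rho>))
    \<le> EH / Theta"
    (is "1 / real m * ?\<Sigma> \<le> _")
proof (cases "?\<Sigma> > 0")
  case False
  then have "1 / real m * ?\<Sigma> \<le> 0" by (intro mult_nonneg_nonpos) auto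
  also have "0 \<le> EH / Theta" using Theta_pos by (simp add: EH_def)
  finally show ?thesis .
next
  case True
  have nonneg: "0 \<le> block_surv - mix_err" using lo q by simp
  have "(q - 3 * mix_err) ^ Suc j \<le> (block_surv - mix_err) ^ Suc j" for j
    using lo q by (intro power_mono) auto
  then have "?\<Sigma> \<le> (\<Sum>j<J. (1 - a) * (block_surv - mix_err) ^ Suc j - real (Suc j) * mix_delay * \<rho>)"
    using a_less_1 by (intro sum_mono) (simp add: mult.assoc mult_left_mono)
  then have "block_len * ?\<Sigma>
      \<le> (\<Sum>j<J. block_len * ((1 - a) * (block_surv - mix_err) ^ Suc j - real (Suc j) * mix_delay * \<rho>))"
    using block_len_pos by (simp add: sum_distrib_left[symmetric])
  also have "\<dots> \<le> EH" by (rule EH_lower[OF nonneg lt1])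
  finally have "block_len * ?\<Sigma> / Theta \<le> EH / Theta" using Theta_pos by (simp add: divide_right_mono)
  moreover have "1 / real m \<le> block_len / Theta"
    using Theta_pos mix_delay_nonneg by (simp add: block_len_def mix_delay_def field_simps)
  then have "1 / real m * ?\<Sigma> \<le> block_len / Theta * ?\<Sigma>" using True by (intro mult_right_mono) auto
  ultimately show ?thesis by simp
qed

end

lemma ratio_close_to_one:
  fixes m k J :: nat and q \<epsilon> :: real
  defines "d \<equiv> (1/2::real) ^ k" and "u \<equiv> real k * T0 * \<rho>"
  assumes m: "m \<ge> 1" and q: "q + 3 * d < 1" "0 < q - 3 * d"
    and lo: "q - d < root m (exp (-1) - real m * u)"
    and hi: "root m ((exp (-1) + real m * u) / (1 - a)) < q + d"
    and up: "(1 / real m + u / (1 - a - exp (-1))) / (1 - q - 3 * d) < 1 + \<epsilon>"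
    and low: "1 - \<epsilon> < 1 / real m * (\<Sum>j<J. (1 - a) * (q - 3 * d) ^ Suc j - real (Suc j) * u)"
  shows "\<bar>EH / Theta - 1\<bar> < \<epsilon>"
proof -
  have err: "mix_err k = d" and delay: "mix_delay k * \<rho> = u"
    by (simp_all add: mix_err_def[OF m] d_def mix_delay_def[OF m] u_def)
  have near: "q - 3 * d < block_surv m - d" "block_surv m + d < q + 3 * d"
    using block_surv_near[OF m, where k=k and q=q] lo hi q(2) by (simp_all add: err delay mult.assoc)
  have "EH / Theta < 1 + \<epsilon>"
    using EH_ratio_upper[OF m, where k=k and q=q] near(2) q(1) up by (simp add: err delay)
  moreover have "1 - \<epsilon> < EH / Theta"
    using EH_ratio_lower[OF m, where k=k and q=q and J=J] near q low by (simp add: err delay)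
  ultimately show ?thesis by (simp add: abs_less_iff)
qed

end

lemma root_exp_minus_one: "0 < m \<Longrightarrow> root m (exp (-1)) = exp (-1 / real m)"
  by (simp add: root_powr_inverse exp_powr_real)

lemma tendsto_inverse_over_one_minus_exp: "(\<lambda>m. (1/real m)/(1 - exp(-1/real m))) \<longlonglongrightarrow> 1" by real_asymp
lemma tendsto_inverse_exp_over_one_minus_exp: "(\<lambda>m. (1/real m) * exp(-1/real m)/(1 - exp(-1/real m))) \<longlonglongrightarrow> 1" by real_asymp

lemma geometric_partial_sums_Suc:
  fixes q :: real assumes "0 \<le> q" "q < 1"
  shows "(\<lambda>J. \<Sum>j<J. q ^ Suc j) \<longlonglongrightarrow> q / (1 - q)"
proof -
  have "(\<lambda>J. \<Sum>j<J. q ^ j) \<longlonglongrightarrow> 1 / (1 - q)"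
    using geometric_sums[of q] assms by (simp add: sums_def)
  then have "(\<lambda>J. q * (\<Sum>j<J. q ^ j)) \<longlonglongrightarrow> q * (1 / (1 - q))" by (intro tendsto_mult tendsto_const)
  then show ?thesis by (simp add: sum_distrib_left)
qed

lemma obtain_block_count:
  assumes e: "\<epsilon> > 0"
  obtains m J where "m \<ge> 1" "1 / real m / (1 - exp (-1 / real m)) < 1 + \<epsilon>"
    "1 - \<epsilon> < 1 / real m * (\<Sum>j<J. exp (-1 / real m) ^ Suc j)"
proof -
  have "\<forall>\<^sub>F m in sequentially. 1 / real m / (1 - exp (-1 / real m)) < 1 + \<epsilon>"
    by (rule order_tendstoD(2)[OF tendsto_inverse_over_one_minus_exp]) (use e in simp)
  moreover have "\<forall>\<^sub>F m in sequentially. 1 - \<epsilon> < 1 / real m * exp (-1 / real m) / (1 - exp (-1 / real m))"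
    by (rule order_tendstoD(1)[OF tendsto_inverse_exp_over_one_minus_exp]) (use e in simp)
  ultimately have "\<forall>\<^sub>F m in sequentially. m \<ge> 1 \<and> 1 / real m / (1 - exp (-1 / real m)) < 1 + \<epsilon>
      \<and> 1 - \<epsilon> < 1 / real m * exp (-1 / real m) / (1 - exp (-1 / real m))"
    using eventually_ge_at_top[of 1] by eventually_elim auto
  then obtain m where m: "m \<ge> 1" "1 / real m / (1 - exp (-1 / real m)) < 1 + \<epsilon>"
      "1 - \<epsilon> < 1 / real m * exp (-1 / real m) / (1 - exp (-1 / real m))"
    using eventually_happens'[OF sequentially_bot] by blast
  have "(\<lambda>J. 1 / real m * (\<Sum>j<J. exp (-1 / real m) ^ Suc j))
      \<longlonglongrightarrow> 1 / real m * (exp (-1 / real m) / (1 - exp (-1 / real m)))"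
    using m(1) by (intro tendsto_mult tendsto_const geometric_partial_sums_Suc) auto
  then have "\<forall>\<^sub>F J in sequentially. 1 - \<epsilon> < 1 / real m * (\<Sum>j<J. exp (-1 / real m) ^ Suc j)"
    using m(3) by (intro order_tendstoD(1)) auto
  then obtain J where "1 - \<epsilon> < 1 / real m * (\<Sum>j<J. exp (-1 / real m) ^ Suc j)"
    using eventually_happens'[OF sequentially_bot] by blast
  with m that show ?thesis by blast
qed

lemma obtain_block_parameters:
  assumes e: "\<epsilon> > 0"
  obtains m k J where "m \<ge> 1"
    "exp (-1 / real m) + 3 * (1/2) ^ k < 1" "0 < exp (-1 / real m) - 3 * (1/2) ^ k"
    "1 / real m / (1 - exp (-1 / real m) - 3 * (1/2) ^ k) < 1 + \<epsilon>"
    "1 - \<epsilon> < 1 / real m * (\<Sum>j<J. (exp (-1 / real m) - 3 * (1/2) ^ k) ^ Suc j)"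
proof -
  obtain m J where m: "m \<ge> 1" and up: "1 / real m / (1 - exp (-1 / real m)) < 1 + \<epsilon>"
      and low: "1 - \<epsilon> < 1 / real m * (\<Sum>j<J. exp (-1 / real m) ^ Suc j)"
    using obtain_block_count[OF e] by blast
  define q where "q = exp (-1 / real m)"
  have q: "0 < q" "q < 1" using m by (auto simp: q_def)
  have d: "(\<lambda>k. 3 * (1/2::real) ^ k) \<longlonglongrightarrow> 0" by (intro tendsto_mult_right_zero LIMSEQ_realpow_zero) auto
  have "(\<lambda>k. q + 3 * (1/2) ^ k) \<longlonglongrightarrow> q + 0" by (intro tendsto_intros d)
  then have ev1: "\<forall>\<^sub>F k in sequentially. q + 3 * (1/2) ^ k < 1" by (rule order_tendstoD(2)) (use q in simp)
  have "(\<lambda>k. q - 3 * (1/2) ^ k) \<longlonglongrightarrow> q - 0" by (intro tendsto_intros d)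
  then have ev2: "\<forall>\<^sub>F k in sequentially. 0 < q - 3 * (1/2) ^ k" by (rule order_tendstoD(1)) (use q in simp)
  have "(\<lambda>k. 1 / real m / (1 - q - 3 * (1/2) ^ k)) \<longlonglongrightarrow> 1 / real m / (1 - q - 0)"
    using q by (intro tendsto_intros d) auto
  then have ev3: "\<forall>\<^sub>F k in sequentially. 1 / real m / (1 - q - 3 * (1/2) ^ k) < 1 + \<epsilon>"
    by (rule order_tendstoD(2)) (use up in \<open>simp add: q_def\<close>)
  have "(\<lambda>k. 1 / real m * (\<Sum>j<J. (q - 3 * (1/2) ^ k) ^ Suc j)) \<longlonglongrightarrow> 1 / real m * (\<Sum>j<J. (q - 0) ^ Suc j)"
    by (intro tendsto_intros d)
  then have ev4: "\<forall>\<^sub>F k in sequentially. 1 - \<epsilon> < 1 / real m * (\<Sum>j<J. (q - 3 * (1/2) ^ k) ^ Suc j)"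
    by (rule order_tendstoD(1)) (use low in \<open>simp add: q_def\<close>)
  have "\<forall>\<^sub>F k in sequentially. q + 3 * (1/2) ^ k < 1 \<and> 0 < q - 3 * (1/2) ^ k
      \<and> 1 / real m / (1 - q - 3 * (1/2) ^ k) < 1 + \<epsilon>
      \<and> 1 - \<epsilon> < 1 / real m * (\<Sum>j<J. (q - 3 * (1/2) ^ k) ^ Suc j)"
    using ev1 ev2 ev3 ev4 by eventually_elim blast
  then obtain k where "q + 3 * (1/2) ^ k < 1" "0 < q - 3 * (1/2) ^ k"
      "1 / real m / (1 - q - 3 * (1/2) ^ k) < 1 + \<epsilon>"
      "1 - \<epsilon> < 1 / real m * (\<Sum>j<J. (q - 3 * (1/2) ^ k) ^ Suc j)"
    using eventually_happens'[OF sequentially_bot] by blast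
  with m that show ?thesis unfolding q_def by blast
qed

lemma ratio_tendsto_one:
  fixes S :: "nat \<Rightarrow> real \<Rightarrow> real" and a \<rho> T0 :: "nat \<Rightarrow> real"
  assumes profile: "\<forall>\<^sub>F N in sequentially. survival_profile (S N) (a N) (\<rho> N) (T0 N)"
    and a0: "a \<longlonglongrightarrow> 0" and mix0: "(\<lambda>N. T0 N * \<rho> N) \<longlonglongrightarrow> 0"
  shows "(\<lambda>N. survival_profile.EH (S N) / survival_profile.Theta (S N)) \<longlonglongrightarrow> 1"
proof (rule tendstoI)
  fix \<epsilon> :: real assume e: "\<epsilon> > 0"
  obtain m k J where m: "m \<ge> 1" and q: "exp (-1 / real m) + 3 * (1/2) ^ k < 1"
      "0 < exp (-1 / real m) - 3 * (1/2) ^ k"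
    and up: "1 / real m / (1 - exp (-1 / real m) - 3 * (1/2) ^ k) < 1 + \<epsilon>/2"
    and low: "1 - \<epsilon>/2 < 1 / real m * (\<Sum>j<J. (exp (-1 / real m) - 3 * (1/2) ^ k) ^ Suc j)"
    by (rule obtain_block_parameters[of "\<epsilon>/2"]) (use e in auto)
  define q where "q = exp (-1 / real m)"
  define d where "d = (1/2::real) ^ k"
  define u where "u N = real k * T0 N * \<rho> N" for N
  have root_q: "root m (exp (-1)) = q" using m by (simp add: root_exp_minus_one q_def)
  have u: "u \<longlonglongrightarrow> 0" unfolding u_def using tendsto_mult[OF tendsto_const mix0, of "real k"] by (simp add: mult.assoc)
  have "(\<lambda>N. root m (exp (-1) - real m * u N)) \<longlonglongrightarrow> root m (exp (-1) - real m * 0)"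
    by (intro tendsto_intros u)
  then have ev_lo: "\<forall>\<^sub>F N in sequentially. q - d < root m (exp (-1) - real m * u N)"
    by (rule order_tendstoD(1)) (simp add: root_q d_def)
  have "(\<lambda>N. root m ((exp (-1) + real m * u N) / (1 - a N))) \<longlonglongrightarrow> root m ((exp (-1) + real m * 0) / (1 - 0))"
    by (intro tendsto_intros u a0) simp
  then have ev_hi: "\<forall>\<^sub>F N in sequentially. root m ((exp (-1) + real m * u N) / (1 - a N)) < q + d"
    by (rule order_tendstoD(2)) (simp add: root_q d_def)
  have "(\<lambda>N. (1 / real m + u N / (1 - a N - exp (-1))) / (1 - q - 3 * d))
      \<longlonglongrightarrow> (1 / real m + 0 / (1 - 0 - exp (-1))) / (1 - q - 3 * d)"
    using q(1) by (intro tendsto_intros u a0) (auto simp: q_def d_def exp_less_one_iff[of "-1", simplified])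
  then have ev_up: "\<forall>\<^sub>F N in sequentially. (1 / real m + u N / (1 - a N - exp (-1))) / (1 - q - 3 * d) < 1 + \<epsilon>"
    by (rule order_tendstoD(2)) (use up e in \<open>simp add: q_def d_def\<close>)
  have "(\<lambda>N. 1 / real m * (\<Sum>j<J. (1 - a N) * (q - 3 * d) ^ Suc j - real (Suc j) * u N))
      \<longlonglongrightarrow> 1 / real m * (\<Sum>j<J. (1 - 0) * (q - 3 * d) ^ Suc j - real (Suc j) * 0)"
    by (intro tendsto_intros u a0)
  then have ev_low: "\<forall>\<^sub>F N in sequentially.
      1 - \<epsilon> < 1 / real m * (\<Sum>j<J. (1 - a N) * (q - 3 * d) ^ Suc j - real (Suc j) * u N)"
    by (rule order_tendstoD(1)) (use low e in \<open>simp add: q_def d_def\<close>)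
  show "\<forall>\<^sub>F N in sequentially. dist (survival_profile.EH (S N) / survival_profile.Theta (S N)) 1 < \<epsilon>"
    using profile ev_lo ev_hi ev_up ev_low
  proof eventually_elim
    case (elim N)
    show ?case using survival_profile.ratio_close_to_one[OF elim(1) m, where k=k and q=q and J=J and \<epsilon>=\<epsilon>] elim(2-5) q
      by (simp add: dist_real_def u_def q_def d_def)
  qed
qed

section \<open>The hitting time of a rare set\<close>

context stationary_chain
begin

lemma survival_profile_of_mixing:
  assumes irr: "irreducible_chain \<Omega> R" and A_ne: "A \<noteq> {}" and small: "sum \<nu> A < 1 - exp (-1)"
    and T0: "T0 > 0" and mixT: "\<forall>\<eta>\<in>\<Omega>. tv_dist \<Omega> (P T0 \<eta>) \<nu> \<le> 1/4"
  shows "survival_profile Surv (sum \<nu> A) flux T0"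
proof
  have "B \<noteq> {}"
  proof
    assume "B = {}"
    then have "sum \<nu> B = 0" by (simp only: sum.empty)
    then show False using nu_compl small exp_gt_zero[of "-1"] by linarith
  qed
  then show "flux > 0" by (rule flux_pos[OF irr A_ne])
  obtain x where x: "x \<in> A" using A_ne by blast
  have "0 < \<nu> x" using nu_pos[OF irr] x Asub by auto
  also have "\<nu> x \<le> sum \<nu> A" using x Asub fin by (intro member_le_sum nu_nonneg) (auto intro: finite_subset)
  finally show "0 < sum \<nu> A" .
  show "Surv 0 = 1 - sum \<nu> A" using Surv_0 nu_compl by simp
  show "\<And>t. 0 \<le> t \<Longrightarrow> 1 - sum \<nu> A - t * flux \<le> Surv t" using Surv_lower nu_compl by fastforce
  show "\<And>t s k. 0 \<le> t \<Longrightarrow> 0 \<le> s \<Longrightarrow> Surv (t + real k * T0 + s) \<le> Surv t * (Surv s + (1/2) ^ k)"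
    by (rule Surv_mixing_upper[OF mixT]) (use T0 in auto)
  show "\<And>t s k. 0 \<le> t \<Longrightarrow> 0 \<le> s \<Longrightarrow>
      Surv t * (Surv s - (1/2) ^ k) - real k * T0 * flux \<le> Surv (t + real k * T0 + s)"
    by (rule Surv_mixing_lower[OF mixT]) (use T0 in auto)
qed (use Surv_antimono Surv_nonneg Surv_lipschitz T0 small in auto)

lemma survival_profile_near_mixing_time:
  assumes irr: "irreducible_chain \<Omega> R" and ne: "\<Omega> \<noteq> {}" and A_ne: "A \<noteq> {}"
    and small: "sum \<nu> A < 1 - exp (-1)" and \<delta>: "\<delta> > 0"
  obtains T where "survival_profile Surv (sum \<nu> A) flux T"
    "T * flux \<le> mixing_time \<Omega> R \<nu> * escape_rate \<Omega> R \<nu> A + \<delta>"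
proof -
  have e: "0 \<le> escape_rate \<Omega> R \<nu> A" using flux_nonneg flux_le_escape_rate by linarith
  obtain T where T: "T > 0" "\<forall>\<eta>\<in>\<Omega>. tv_dist \<Omega> (P T \<eta>) \<nu> \<le> 1/4"
      "T * escape_rate \<Omega> R \<nu> A \<le> mixing_time \<Omega> R \<nu> * escape_rate \<Omega> R \<nu> A + \<delta>"
    by (rule obtain_mixing_time_near[OF irr ne e \<delta>])
  have "T * flux \<le> T * escape_rate \<Omega> R \<nu> A" using T(1) flux_le_escape_rate by (intro mult_left_mono) auto
  also note T(3)
  finally show ?thesis using that survival_profile_of_mixing[OF irr A_ne small T(1,2)] by blast
qed

lemma survival_profile_ratio:
  assumes "survival_profile Surv a \<rho> T0"
  shows "survival_profile.EH Surv / survival_profile.Theta Surv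
    = expected_hitting \<Omega> R \<nu> A / theta_time \<Omega> R \<nu> A"
proof -
  interpret survival_profile Surv a \<rho> T0 by (rule assms)
  show ?thesis by (simp add: EH_def Theta_def expected_hitting_def theta_time_def)
qed

end

theorem lemma3p5:
  fixes \<Omega> :: "nat \<Rightarrow> 'a set"
    and R :: "nat \<Rightarrow> 'a \<Rightarrow> 'a \<Rightarrow> real"
    and \<nu> :: "nat \<Rightarrow> 'a \<Rightarrow> real"
    and A :: "nat \<Rightarrow> 'a set"
  assumes fin: "\<And>N. N \<ge> 1 \<Longrightarrow> finite (\<Omega> N) \<and> \<Omega> N \<noteq> {}"
    and rates: "\<And>N. N \<ge> 1 \<Longrightarrow> valid_rates (\<Omega> N) (R N)"
    and irr: "\<And>N. N \<ge> 1 \<Longrightarrow> irreducible_chain (\<Omega> N) (R N)"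
    and stat: "\<And>N. N \<ge> 1 \<Longrightarrow> stationary (\<Omega> N) (R N) (\<nu> N)"
    and uniq: "\<And>N \<mu>. N \<ge> 1 \<Longrightarrow> stationary (\<Omega> N) (R N) \<mu> \<Longrightarrow> (\<forall>x\<in>\<Omega> N. \<mu> x = \<nu> N x)"
    and Asub: "\<And>N. N \<ge> 1 \<Longrightarrow> A N \<subseteq> \<Omega> N \<and> A N \<noteq> {}"
    and Asmall: "(\<lambda>N. sum (\<nu> N) (A N)) \<longlonglongrightarrow> 0"
    and mix: "(\<lambda>N. mixing_time (\<Omega> N) (R N) (\<nu> N) * escape_rate (\<Omega> N) (R N) (\<nu> N) (A N)) \<longlonglongrightarrow> 0"
  shows "(\<lambda>N. expected_hitting (\<Omega> N) (R N) (\<nu> N) (A N) / theta_time (\<Omega> N) (R N) (\<nu> N) (A N))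
           \<longlonglongrightarrow> 1"
proof -
  have C: "stationary_chain (\<Omega> N) (R N) (\<nu> N) (A N)" if "N \<ge> 1" for N
    using fin[OF that] rates[OF that] stat[OF that] Asub[OF that] by unfold_locales auto
  define r where "r N = stationary_chain.flux (\<Omega> N) (R N) (\<nu> N) (A N)" for N
  define b where "b N = mixing_time (\<Omega> N) (R N) (\<nu> N) * escape_rate (\<Omega> N) (R N) (\<nu> N) (A N)
    + 1 / (real N + 1)" for N
  define good where "good N \<longleftrightarrow> N \<ge> 1 \<and> sum (\<nu> N) (A N) < 1 - exp (-1)" for N
  have "\<exists>T. good N \<longrightarrow> survival_profile (survival (\<Omega> N) (R N) (\<nu> N) (A N)) (sum (\<nu> N) (A N)) (r N) T
      \<and> T * r N \<le> b N" for N
  proof (cases "good N")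
    case True
    then have N: "N \<ge> 1" and small: "sum (\<nu> N) (A N) < 1 - exp (-1)" by (simp_all add: good_def)
    obtain T where "survival_profile (survival (\<Omega> N) (R N) (\<nu> N) (A N)) (sum (\<nu> N) (A N)) (r N) T"
        "T * r N \<le> b N"
      by (rule stationary_chain.survival_profile_near_mixing_time[OF C[OF N] irr[OF N] _ _ small, of "1 / (real N + 1)"])
        (use fin[OF N] Asub[OF N] in \<open>auto simp: r_def b_def\<close>)
    then show ?thesis by blast
  qed simp
  then obtain T0 where T0: "\<And>N. good N \<Longrightarrow>
      survival_profile (survival (\<Omega> N) (R N) (\<nu> N) (A N)) (sum (\<nu> N) (A N)) (r N) (T0 N)
      \<and> T0 N * r N \<le> b N"
    by metis
  have "\<forall>\<^sub>F N in sequentially. sum (\<nu> N) (A N) < 1 - exp (-1)"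
    using Asmall by (rule order_tendstoD(2)) (simp add: exp_less_one_iff[of "-1", simplified])
  then have ev: "\<forall>\<^sub>F N in sequentially. good N"
    using eventually_ge_at_top[of 1] unfolding good_def by eventually_elim auto
  have profile: "\<forall>\<^sub>F N in sequentially.
      survival_profile (survival (\<Omega> N) (R N) (\<nu> N) (A N)) (sum (\<nu> N) (A N)) (r N) (T0 N)"
    using ev by (rule eventually_mono) (use T0 in blast)
  have "(\<lambda>N. 1 / (real N + 1)) \<longlonglongrightarrow> 0" by real_asymp
  from tendsto_add[OF mix this] have "b \<longlonglongrightarrow> 0" unfolding b_def[abs_def] by simp
  moreover have "\<forall>\<^sub>F N in sequentially. 0 \<le> T0 N * r N \<and> T0 N * r N \<le> b N"
    using ev by (rule eventually_mono)
      (use T0 survival_profile.T0_pos survival_profile.rho_pos in \<open>fastforce intro: less_imp_le\<close>)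
  ultimately have mix0: "(\<lambda>N. T0 N * r N) \<longlonglongrightarrow> 0"
    unfolding eventually_conj_iff by - (erule conjE, rule tendsto_sandwich[OF _ _ tendsto_const])
  have "\<forall>\<^sub>F N in sequentially. survival_profile.EH (survival (\<Omega> N) (R N) (\<nu> N) (A N))
      / survival_profile.Theta (survival (\<Omega> N) (R N) (\<nu> N) (A N))
    = expected_hitting (\<Omega> N) (R N) (\<nu> N) (A N) / theta_time (\<Omega> N) (R N) (\<nu> N) (A N)"
    using profile ev by eventually_elim (simp add: stationary_chain.survival_profile_ratio[OF C] good_def)
  then show ?thesis by (rule Lim_transform_eventually[OF ratio_tendsto_one[OF profile Asmall mix0]])
qed

end
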